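(* Let $S=(Z_1,\dots,Z_n)$ consist of $n$ i.i.d. samples from a distribution $\mu$ on $\mathsf Z$, and let $P_{W|S}$ be any conditional distribution (learning algorithm) with values $W=(W_1,\dots,W_d)\in\mathcal B_1\times\cdots\times\mathcal B_d$. Then $$\mathrm{gen}(\mu,P_{W|S})\le\frac{LMR\sqrt2}{\sqrt n}\sum_{k=1}^d\beta_k\sqrt{I(S;W_1,\dots,W_k)},$$ where $I(S;W_1,\dots,W_k)$ is the mutual information under the joint distribution $\mu^{\otimes n}P_{W|S}$.
   Context: Let $d\ge2$, let $m,\delta_1,\dots,\delta_d$ be positive integers, $\delta_0=m$, $R>0$, $\mathcal X=\{x\in\mathbb R^m:|x|_2\le R\}$ ($|\cdot|_2$ Euclidean norm), $\mathcal Y$ a set and $\mathsf Z=\mathcal X\times\mathcal Y$. For $1\le j\le d$ fix $M_j\in\mathbb R^{\delta_j\times\delta_{j-1}}$ with $\|M_j\|_2>0$ (spectral norm) and $\alpha_j>0$, and let $\mathcal B_j=\{\mathbf W\in\mathbb R^{\delta_j\times\delta_{j-1}}:\|\mathbf W-M_j\|_2\le\alpha_j\|M_j\|_2\}$. Let $\phi$ be an activation (acting on vectors of every relevant dimension, e.g. entrywise ReLU) that is $1$-Lipschitz w.r.t. the Euclidean norm with $\phi(0)=0$, and $\phi_o$ either the identity or the soft-max on $\mathbb R^{\delta_d}$. For $w=(\mathbf W_1,\dots,\mathbf W_d)\in\mathcal B_1\times\cdots\times\mathcal B_d$ let $h_w(x)=\phi_o(\mathbf W_d\,\phi(\mathbf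 W_{d-1}\cdots\phi(\mathbf W_1x)\cdots))$. Let $M=\prod_{j=1}^d\|M_j\|_2$ and $\beta_k=\alpha_k\exp(\sum_{i=1}^{k-1}\alpha_i)$. Let $\ell:(\mathcal B_1\times\cdots\times\mathcal B_d)\times\mathsf Z\to[0,\infty)$ be a measurable loss for which there is $L>0$ with $|\ell(w,z)-\ell(w',z)|\le L|h_w(x)-h_{w'}(x)|_2$ for all $w,w'$ and all $z=(x,y)\in\mathsf Z$. Define $L_\mu(w)=\mathbb E[\ell(w,Z)]$ with $Z\sim\mu$, $L_S(w)=\frac1n\sum_{i=1}^n\ell(w,Z_i)$, and the expected generalization error $\mathrm{gen}(\mu,P_{W|S})=\mathbb E[L_\mu(W)-L_S(W)]$, the expectation being under the joint law $\mu^{\otimes n}P_{W|S}$ of $(S,W)$. *)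

theory Defs
  imports "HOL-Probability.Probability"
begin

text \<open>Finite-dimensional vectors and matrices of varying dimension are represented
uniformly: a vector of \<open>\<real>\<^sup>k\<close> is a function \<open>nat \<Rightarrow> real\<close> vanishing at indices \<open>\<ge> k\<close>,
an \<open>r \<times> c\<close> matrix is a function \<open>nat \<Rightarrow> nat \<Rightarrow> real\<close> vanishing outside \<open>{..<r} \<times> {..<c}\<close>.\<close>

definition vecs :: "nat \<Rightarrow> (nat \<Rightarrow> real) set" where
  "vecs k = {v. \<forall>i\<ge>k. v i = 0}"

definition mats :: "nat \<Rightarrow> nat \<Rightarrow> (nat \<Rightarrow> nat \<Rightarrow> real) set" where
  "mats r c = {A. \<forall>i j. (r \<le> i \<or> c \<le> j) \<longrightarrow> A i j = 0}"

definition vnorm :: "nat \<Rightarrow> (nat \<Rightarrow> real) \<Rightarrow> real" where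
  "vnorm k v = sqrt (\<Sum>i<k. (v i)\<^sup>2)"

definition mat_vec :: "nat \<Rightarrow> nat \<Rightarrow> (nat \<Rightarrow> nat \<Rightarrow> real) \<Rightarrow> (nat \<Rightarrow> real) \<Rightarrow> (nat \<Rightarrow> real)" where
  "mat_vec r c A v = (\<lambda>i. if i < r then (\<Sum>j<c. A i j * v j) else 0)"

definition spec_norm :: "nat \<Rightarrow> nat \<Rightarrow> (nat \<Rightarrow> nat \<Rightarrow> real) \<Rightarrow> real" where
  "spec_norm r c A = (SUP v \<in> {v \<in> vecs c. vnorm c v \<le> 1}. vnorm r (mat_vec r c A v))"

definition softmax :: "nat \<Rightarrow> (nat \<Rightarrow> real) \<Rightarrow> (nat \<Rightarrow> real)" where
  "softmax k v = (\<lambda>i. if i < k then exp (v i) / (\<Sum>j<k. exp (v j)) else 0)"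

text \<open>Hidden layers: \<open>layers \<delta> \<phi> w j x = \<phi>(W\<^sub>j \<phi>(\<dots> \<phi>(W\<^sub>1 x)))\<close>; \<open>\<phi> k\<close> is the activation
acting on \<open>\<real>\<^sup>k\<close>; \<open>\<delta> 0 = m\<close> is the input dimension, \<open>w j = W\<^sub>j\<close>.\<close>
fun layers :: "(nat \<Rightarrow> nat) \<Rightarrow> (nat \<Rightarrow> (nat \<Rightarrow> real) \<Rightarrow> (nat \<Rightarrow> real))
      \<Rightarrow> (nat \<Rightarrow> nat \<Rightarrow> nat \<Rightarrow> real) \<Rightarrow> nat \<Rightarrow> (nat \<Rightarrow> real) \<Rightarrow> (nat \<Rightarrow> real)" where
  "layers \<delta> \<phi> w 0 x = x"
| "layers \<delta> \<phi> w (Suc j) x =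
     \<phi> (\<delta> (Suc j)) (mat_vec (\<delta> (Suc j)) (\<delta> j) (w (Suc j)) (layers \<delta> \<phi> w j x))"

definition net :: "nat \<Rightarrow> (nat \<Rightarrow> nat) \<Rightarrow> (nat \<Rightarrow> (nat \<Rightarrow> real) \<Rightarrow> (nat \<Rightarrow> real))
      \<Rightarrow> ((nat \<Rightarrow> real) \<Rightarrow> (nat \<Rightarrow> real)) \<Rightarrow> (nat \<Rightarrow> nat \<Rightarrow> nat \<Rightarrow> real) \<Rightarrow> (nat \<Rightarrow> real) \<Rightarrow> (nat \<Rightarrow> real)" where
  "net d \<delta> \<phi> \<phi>o w x = \<phi>o (mat_vec (\<delta> d) (\<delta> (d - 1)) (w d) (layers \<delta> \<phi> w (d - 1) x))"

definition Bset :: "(nat \<Rightarrow> nat) \<Rightarrow> (nat \<Rightarrow> nat \<Rightarrow> nat \<Rightarrow> real) \<Rightarrow> (nat \<Rightarrow> real) \<Rightarrow> nat \<Rightarrow> (nat \<Rightarrow> nat \<Rightarrow> real) set" where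
  "Bset \<delta> M \<alpha> j = {W \<in> mats (\<delta> j) (\<delta> (j - 1)).
      spec_norm (\<delta> j) (\<delta> (j - 1)) (W - M j) \<le> \<alpha> j * spec_norm (\<delta> j) (\<delta> (j - 1)) (M j)}"

definition Xset :: "nat \<Rightarrow> real \<Rightarrow> (nat \<Rightarrow> real) set" where
  "Xset m R = {x \<in> vecs m. vnorm m x \<le> R}"

definition Wspace :: "(nat \<Rightarrow> nat) \<Rightarrow> (nat \<Rightarrow> nat \<Rightarrow> nat \<Rightarrow> real) \<Rightarrow> (nat \<Rightarrow> real) \<Rightarrow> nat
      \<Rightarrow> (nat \<Rightarrow> nat \<Rightarrow> nat \<Rightarrow> real) measure" where
  "Wspace \<delta> M \<alpha> k = (\<Pi>\<^sub>M j\<in>{1..k}. restrict_space borel (Bset \<delta> M \<alpha> j))"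

definition beta :: "(nat \<Rightarrow> real) \<Rightarrow> nat \<Rightarrow> real" where
  "beta \<alpha> k = \<alpha> k * exp (\<Sum>i\<in>{1..<k}. \<alpha> i)"

text \<open>Exactly in this case the library's real-valued
\<open>KL_divergence\<close> (and hence \<open>mutual_information\<close>) is the true (finite) value.\<close>
definition finite_KL :: "'a measure \<Rightarrow> 'a measure \<Rightarrow> bool" where
  "finite_KL M N \<longleftrightarrow> absolutely_continuous M N \<and> integrable N (entropy_density (exp 1) M N)"

end

theory Submission
  imports Defs
begin

text \<open>Write \<open>w\<^sup>(\<^sup>k\<^sup>)\<close> for the weights whose first \<open>k\<close> layers are those of \<open>w\<close> and whose remaining
  layers are the centres \<open>M\<^sub>j\<close>.  The loss telescopes along \<open>w\<^sup>(\<^sup>0\<^sup>), ..., w\<^sup>(\<^sup>d\<^sup>) = w\<close>, and the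
  \<open>k\<close>-th increment \<open>\<Delta>\<^sub>k\<close> depends on \<open>w\<close> only through \<open>W\<^sub>1, ..., W\<^sub>k\<close>.  The two networks in
  \<open>\<Delta>\<^sub>k\<close> differ in layer \<open>k\<close> only, and all maps between the layers are 1-Lipschitz, so
  \<open>|\<Delta>\<^sub>k| \<le> L |x| \<parallel>W\<^sub>k - M\<^sub>k\<parallel> \<Prod>\<^sub>i\<^sub>\<noteq>\<^sub>k \<parallel>W\<^sub>i\<parallel> \<le> L R M \<beta>\<^sub>k\<close>, because \<open>\<parallel>W\<^sub>i\<parallel> \<le> (1 + \<alpha>\<^sub>i) \<parallel>M\<^sub>i\<parallel> \<le> exp \<alpha>\<^sub>i \<parallel>M\<^sub>i\<parallel>\<close>
  for \<open>i < k\<close>.  The fixed hypothesis \<open>w\<^sup>(\<^sup>0\<^sup>)\<close> has zero expected generalization gap, and the gap of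
  each bounded increment is at most \<open>L R M \<beta>\<^sub>k sqrt (2 I(S; W\<^sub>1, ..., W\<^sub>k) / n)\<close> by the argument of
  Xu and Raginsky: the Donsker--Varadhan inequality against the product of the marginals, Hoeffding's
  lemma under that product, and optimization over the free parameter.\<close>

section \<open>Euclidean and spectral norms\<close>

lemma vnorm_eq_L2_set: "vnorm k v = L2_set v {..<k}"
  by (simp add: vnorm_def L2_set_def)

lemma vnorm_nonneg [simp]: "0 \<le> vnorm k v"
  by (simp add: vnorm_def sum_nonneg)

lemma vnorm_zero [simp]: "vnorm k (\<lambda>_. 0) = 0"
  by (simp add: vnorm_def)

lemma vnorm_diff_zero [simp]: "vnorm k (u - (\<lambda>_. 0)) = vnorm k u"
  by (simp add: fun_diff_def)

lemma vnorm_triangle: "vnorm k (\<lambda>i. u i + v i) \<le> vnorm k u + vnorm k v"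
  unfolding vnorm_eq_L2_set by (rule L2_set_triangle_ineq)

lemma vnorm_cong: "(\<And>i. i < k \<Longrightarrow> u i = v i) \<Longrightarrow> vnorm k u = vnorm k v"
  unfolding vnorm_def by (intro arg_cong[where f=sqrt] sum.cong) auto

lemma vnorm_scale: "0 \<le> t \<Longrightarrow> vnorm k (\<lambda>i. t * v i) = t * vnorm k v"
  unfolding vnorm_eq_L2_set by (simp add: L2_set_right_distrib)

lemma vnorm_eq_0D: "vnorm k v = 0 \<Longrightarrow> i < k \<Longrightarrow> v i = 0"
  unfolding vnorm_eq_L2_set by (subst (asm) L2_set_eq_0_iff) auto

lemma zero_in_vecs [simp]: "(\<lambda>_. 0) \<in> vecs k"
  by (simp add: vecs_def)

lemma mat_vec_in_vecs: "mat_vec r c A v \<in> vecs r"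
  by (simp add: mat_vec_def vecs_def)

lemma mat_vec_zero [simp]: "mat_vec r c A (\<lambda>_. 0) = (\<lambda>_. 0)"
  by (simp add: mat_vec_def fun_eq_iff)

lemma mat_vec_diff_left: "mat_vec r c (A - B) v = mat_vec r c A v - mat_vec r c B v"
  by (auto simp: mat_vec_def fun_eq_iff algebra_simps sum_subtractf)

lemma mat_vec_add_left:
  "mat_vec r c (\<lambda>i j. A i j + B i j) v = (\<lambda>i. mat_vec r c A v i + mat_vec r c B v i)"
  by (auto simp: mat_vec_def fun_eq_iff algebra_simps sum.distrib)

lemma mat_vec_diff_right: "mat_vec r c A (u - v) = mat_vec r c A u - mat_vec r c A v"
  by (auto simp: mat_vec_def fun_eq_iff algebra_simps sum_subtractf)

lemma mat_vec_scale: "mat_vec r c A (\<lambda>i. t * v i) = (\<lambda>i. t * mat_vec r c A v i)"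
  by (auto simp: mat_vec_def fun_eq_iff algebra_simps sum_distrib_left)

lemma mat_vec_cong: "(\<And>j. j < c \<Longrightarrow> u j = v j) \<Longrightarrow> mat_vec r c A u = mat_vec r c A v"
  by (auto simp: mat_vec_def fun_eq_iff intro!: sum.cong)

definition frobenius_norm :: "nat \<Rightarrow> nat \<Rightarrow> (nat \<Rightarrow> nat \<Rightarrow> real) \<Rightarrow> real" where
  "frobenius_norm r c A = sqrt (\<Sum>i<r. \<Sum>j<c. (A i j)\<^sup>2)"

lemma frobenius_norm_nonneg: "0 \<le> frobenius_norm r c A"
  by (simp add: frobenius_norm_def sum_nonneg)

lemma vnorm_mat_vec_le_frobenius: "vnorm r (mat_vec r c A v) \<le> frobenius_norm r c A * vnorm c v"
proof -
  have row: "(\<Sum>j<c. A i j * v j)\<^sup>2 \<le> (\<Sum>j<c. (A i j)\<^sup>2) * (\<Sum>j<c. (v j)\<^sup>2)" for i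
  proof -
    have "\<bar>\<Sum>j<c. A i j * v j\<bar> \<le> (\<Sum>j<c. \<bar>A i j\<bar> * \<bar>v j\<bar>)"
      by (rule order.trans[OF sum_abs]) (simp add: abs_mult)
    also have "\<dots> \<le> L2_set (A i) {..<c} * L2_set v {..<c}"
      by (rule L2_set_mult_ineq)
    finally have "(\<Sum>j<c. A i j * v j)\<^sup>2 \<le> (L2_set (A i) {..<c} * L2_set v {..<c})\<^sup>2"
      by (metis abs_ge_zero power2_abs power_mono)
    then show ?thesis
      by (simp add: L2_set_def power_mult_distrib sum_nonneg)
  qed
  have "(\<Sum>i<r. (mat_vec r c A v i)\<^sup>2) \<le> (\<Sum>i<r. (\<Sum>j<c. (A i j)\<^sup>2) * (\<Sum>j<c. (v j)\<^sup>2))"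
    by (intro sum_mono) (simp add: mat_vec_def row)
  then have "sqrt (\<Sum>i<r. (mat_vec r c A v i)\<^sup>2)
      \<le> sqrt ((\<Sum>i<r. \<Sum>j<c. (A i j)\<^sup>2) * (\<Sum>j<c. (v j)\<^sup>2))"
    by (simp add: real_sqrt_le_mono sum_distrib_right)
  then show ?thesis
    by (simp add: vnorm_def frobenius_norm_def real_sqrt_mult)
qed

lemma bdd_above_spec_norm:
  "bdd_above ((\<lambda>v. vnorm r (mat_vec r c A v)) ` {v \<in> vecs c. vnorm c v \<le> 1})"
proof (rule bdd_aboveI2)
  fix v assume "v \<in> {v \<in> vecs c. vnorm c v \<le> 1}"
  then have "frobenius_norm r c A * vnorm c v \<le> frobenius_norm r c A"
    using frobenius_norm_nonneg[of r c A] by (simp add: mult_left_le)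
  then show "vnorm r (mat_vec r c A v) \<le> frobenius_norm r c A"
    using vnorm_mat_vec_le_frobenius[of r c A v] by linarith
qed

lemma spec_norm_upper:
  "v \<in> vecs c \<Longrightarrow> vnorm c v \<le> 1 \<Longrightarrow> vnorm r (mat_vec r c A v) \<le> spec_norm r c A"
  unfolding spec_norm_def by (rule cSUP_upper[OF _ bdd_above_spec_norm]) simp

lemma spec_norm_least:
  "(\<And>v. v \<in> vecs c \<Longrightarrow> vnorm c v \<le> 1 \<Longrightarrow> vnorm r (mat_vec r c A v) \<le> b) \<Longrightarrow> spec_norm r c A \<le> b"
  unfolding spec_norm_def by (rule cSUP_least) (auto intro: exI[of _ "\<lambda>_. 0"])

lemma spec_norm_nonneg: "0 \<le> spec_norm r c A"
  using spec_norm_upper[of "\<lambda>_. 0" c r A] by simp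

lemma spec_norm_diff_self [simp]: "spec_norm r c (A - A) = 0"
  by (intro antisym spec_norm_least spec_norm_nonneg) (simp add: mat_vec_diff_left vnorm_def)

lemma spec_norm_triangle:
  "spec_norm r c (\<lambda>i j. A i j + B i j) \<le> spec_norm r c A + spec_norm r c B"
proof (rule spec_norm_least)
  fix v assume v: "v \<in> vecs c" "vnorm c v \<le> 1"
  have "vnorm r (mat_vec r c (\<lambda>i j. A i j + B i j) v) \<le> vnorm r (mat_vec r c A v) + vnorm r (mat_vec r c B v)"
    unfolding mat_vec_add_left by (rule vnorm_triangle)
  also have "\<dots> \<le> spec_norm r c A + spec_norm r c B"
    by (intro add_mono spec_norm_upper v)
  finally show "vnorm r (mat_vec r c (\<lambda>i j. A i j + B i j) v) \<le> spec_norm r c A + spec_norm r c B" .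
qed

lemma vnorm_mat_vec_le: "vnorm r (mat_vec r c A v) \<le> spec_norm r c A * vnorm c v"
proof -
  \<comment> \<open>Only the first \<open>c\<close> entries of \<open>v\<close> matter, so we may assume \<open>v \<in> vecs c\<close>.\<close>
  define v' where "v' = (\<lambda>i. if i < c then v i else 0)"
  have Av: "mat_vec r c A v = mat_vec r c A v'" and nv: "vnorm c v = vnorm c v'"
    by (auto simp: v'_def intro: mat_vec_cong vnorm_cong)
  have v': "v' \<in> vecs c"
    by (simp add: v'_def vecs_def)
  show ?thesis
  proof (cases "vnorm c v' = 0")
    case True
    then have "mat_vec r c A v' = (\<lambda>_. 0)"
      using mat_vec_cong[of c v' "\<lambda>_. 0"] vnorm_eq_0D by fastforce
    then show ?thesis
      by (simp add: Av spec_norm_nonneg)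
  next
    case False
    define t where "t = vnorm c v'"
    have t: "t > 0"
      using False vnorm_nonneg[of c v'] unfolding t_def by linarith
    have "vnorm c (\<lambda>i. (1 / t) * v' i) = 1"
      using t by (subst vnorm_scale) (auto simp: t_def)
    then have "vnorm r (mat_vec r c A (\<lambda>i. (1 / t) * v' i)) \<le> spec_norm r c A"
      using v' by (intro spec_norm_upper) (auto simp: vecs_def)
    then have "(1 / t) * vnorm r (mat_vec r c A v') \<le> spec_norm r c A"
      unfolding mat_vec_scale by (subst (asm) vnorm_scale) (use t in auto)
    then show ?thesis
      using t by (simp add: Av nv t_def field_simps)
  qed
qed

section \<open>The soft-max is 1-Lipschitz\<close>

lemma softmax_nonneg: "0 \<le> softmax k v i"
  by (simp add: softmax_def sum_nonneg)

lemma sum_softmax: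
  assumes "0 < k" shows "(\<Sum>i<k. softmax k v i) = 1"
proof -
  have "0 < (\<Sum>i<k. exp (v i))"
    using assms by (intro sum_pos) auto
  then show ?thesis
    by (simp add: softmax_def flip: sum_divide_distrib)
qed

lemma softmax_le_one: "softmax k v i \<le> 1"
proof (cases "i < k")
  case True
  then have "softmax k v i \<le> (\<Sum>j<k. softmax k v j)"
    using softmax_nonneg by (intro member_le_sum) auto
  with True show ?thesis
    by (simp add: sum_softmax)
qed (simp add: softmax_def)

lemma softmax_line_has_derivative:
  fixes u x :: "nat \<Rightarrow> real" and k i :: nat
  defines "p \<equiv> \<lambda>t. softmax k (\<lambda>j. u j + t * x j)"
  assumes i: "i < k"
  shows "((\<lambda>t. p t i) has_real_derivative p t i * (x i - (\<Sum>j<k. p t j * x j))) (at t)"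
proof -
  define Z where "Z = (\<lambda>t. \<Sum>j<k. exp (u j + t * x j))"
  have Z: "Z t > 0"
    unfolding Z_def using i by (intro sum_pos) auto
  have p: "p t j = exp (u j + t * x j) / Z t" if "j < k" for t j
    using that by (simp add: p_def softmax_def Z_def)
  have "((\<lambda>t. exp (u i + t * x i) / Z t) has_real_derivative
          (exp (u i + t * x i) * x i * Z t - exp (u i + t * x i) * (\<Sum>j<k. exp (u j + t * x j) * x j))
            / (Z t * Z t)) (at t)"
    using Z unfolding Z_def by (auto intro!: derivative_eq_intros)
  moreover have "(exp (u i + t * x i) * x i * Z t - exp (u i + t * x i) * (\<Sum>j<k. exp (u j + t * x j) * x j))
      / (Z t * Z t) = p t i * (x i - (\<Sum>j<k. p t j * x j))"
    using Z i by (simp add: p field_simps sum_divide_distrib sum_distrib_left)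
  ultimately show ?thesis
    using i by (simp add: p)
qed

lemma sum_sq_weighted_centered_le:
  fixes p x :: "nat \<Rightarrow> real"
  assumes p0: "\<And>i. 0 \<le> p i" and p1: "\<And>i. p i \<le> 1" and ps: "(\<Sum>i<k. p i) = 1"
  shows "(\<Sum>i<k. (p i * (x i - (\<Sum>j<k. p j * x j)))\<^sup>2) \<le> (\<Sum>i<k. (x i)\<^sup>2)"
proof -
  define m where "m = (\<Sum>j<k. p j * x j)"
  have "(\<Sum>i<k. (p i * (x i - m))\<^sup>2) \<le> (\<Sum>i<k. p i * (x i - m)\<^sup>2)"
  proof (intro sum_mono)
    fix i
    have "p i * p i \<le> p i"
      using p0 p1 by (simp add: mult_left_le_one_le)
    then show "(p i * (x i - m))\<^sup>2 \<le> p i * (x i - m)\<^sup>2"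
      by (simp add: power_mult_distrib power2_eq_square[of "p i"] mult_right_mono)
  qed
  also have "\<dots> = (\<Sum>i<k. p i * (x i)\<^sup>2) - 2 * m * (\<Sum>i<k. p i * x i) + m\<^sup>2 * (\<Sum>i<k. p i)"
    by (simp add: power2_eq_square algebra_simps sum.distrib sum_subtractf sum_distrib_left sum_distrib_right)
  also have "\<dots> = (\<Sum>i<k. p i * (x i)\<^sup>2) - m\<^sup>2"
    by (simp add: ps m_def power2_eq_square)
  also have "\<dots> \<le> (\<Sum>i<k. (x i)\<^sup>2)"
    using p0 p1 by (smt (verit) mult_left_le_one_le sum_mono zero_le_power2)
  finally show ?thesis
    by (simp add: m_def)
qed

lemma softmax_lipschitz: "vnorm k (softmax k u - softmax k v) \<le> vnorm k (u - v)"
proof (cases "k = 0")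
  case False
  define x where "x = (\<lambda>i. v i - u i)"
  define p where "p = (\<lambda>t. softmax k (\<lambda>j. u j + t * x j))"
  define e where "e = (\<lambda>i. softmax k v i - softmax k u i)"
  define N where "N = vnorm k e"
  \<comment> \<open>By the mean value theorem \<open>\<parallel>e\<parallel>\<^sup>2 = g 1 - g 0 = g' z\<close>, which pairs \<open>e\<close> with the Jacobian of the
    soft-max at \<open>p z\<close> applied to \<open>x\<close>; that vector has norm at most \<open>\<parallel>x\<parallel>\<close>.\<close>
  define g where "g = (\<lambda>t. \<Sum>i<k. e i * p t i)"
  have "(g has_real_derivative (\<Sum>i<k. e i * (p t i * (x i - (\<Sum>j<k. p t j * x j))))) (at t)" for t
    unfolding g_def p_def
    by (auto intro!: derivative_eq_intros softmax_line_has_derivative simp: mult.commute)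
  then obtain z where z: "g 1 - g 0 = (\<Sum>i<k. e i * (p z i * (x i - (\<Sum>j<k. p z j * x j))))"
    using MVT2[of 0 1 g] by force
  have "p 1 = softmax k v" "p 0 = softmax k u"
    by (simp_all add: p_def x_def)
  then have "g 1 - g 0 = (\<Sum>i<k. (e i)\<^sup>2)"
    by (simp add: g_def e_def power2_eq_square algebra_simps flip: sum_subtractf)
  then have "N\<^sup>2 = (\<Sum>i<k. e i * (p z i * (x i - (\<Sum>j<k. p z j * x j))))"
    using z by (simp add: N_def vnorm_def sum_nonneg)
  also have "\<dots> \<le> (\<Sum>i<k. \<bar>e i\<bar> * \<bar>p z i * (x i - (\<Sum>j<k. p z j * x j))\<bar>)"
    by (intro sum_mono) (metis abs_ge_self abs_mult)
  also have "\<dots> \<le> N * L2_set (\<lambda>i. p z i * (x i - (\<Sum>j<k. p z j * x j))) {..<k}"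
    unfolding N_def vnorm_eq_L2_set by (rule L2_set_mult_ineq)
  also have "\<dots> \<le> N * L2_set x {..<k}"
    unfolding L2_set_def using False
    by (intro mult_left_mono real_sqrt_le_mono sum_sq_weighted_centered_le)
       (simp_all add: N_def p_def softmax_nonneg softmax_le_one sum_softmax)
  finally have "N\<^sup>2 \<le> N * L2_set x {..<k}" .
  then have "N \<le> L2_set x {..<k}"
    using vnorm_nonneg[of k e] L2_set_nonneg[of x "{..<k}"] unfolding N_def power2_eq_square
    by (metis mult_le_cancel_left_pos not_le order_le_less_trans)
  moreover have "vnorm k (softmax k u - softmax k v) = N" "L2_set x {..<k} = vnorm k (u - v)"
    unfolding N_def e_def x_def vnorm_def L2_set_def
    by (auto intro!: arg_cong[where f=sqrt] sum.cong simp: power2_commute)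
  ultimately show ?thesis
    by simp
qed (simp add: vnorm_def)

section \<open>Hybrid weights\<close>

definition hybrid :: "nat \<Rightarrow> nat \<Rightarrow> (nat \<Rightarrow> nat \<Rightarrow> nat \<Rightarrow> real) \<Rightarrow> (nat \<Rightarrow> nat \<Rightarrow> nat \<Rightarrow> real)
    \<Rightarrow> (nat \<Rightarrow> nat \<Rightarrow> nat \<Rightarrow> real)" where
  "hybrid d k M u = (\<lambda>j\<in>{1..d}. if j \<le> k then u j else M j)"

lemma space_Wspace: "space (Wspace \<delta> M \<alpha> k) = (\<Pi>\<^sub>E j\<in>{1..k}. Bset \<delta> M \<alpha> j)"
  by (simp add: Wspace_def space_PiM space_restrict_space)

lemma centre_in_Bset: "M j \<in> mats (\<delta> j) (\<delta> (j - 1)) \<Longrightarrow> 0 \<le> \<alpha> j \<Longrightarrow> M j \<in> Bset \<delta> M \<alpha> j"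
  by (simp add: Bset_def spec_norm_nonneg)

lemma measurable_restrict_Wspace:
  "k \<le> d \<Longrightarrow> (\<lambda>w. restrict w {1..k}) \<in> measurable (Wspace \<delta> M \<alpha> d) (Wspace \<delta> M \<alpha> k)"
  unfolding Wspace_def by (rule measurable_restrict_subset) auto

context
  fixes d :: nat and \<delta> :: "nat \<Rightarrow> nat" and M :: "nat \<Rightarrow> nat \<Rightarrow> nat \<Rightarrow> real" and \<alpha> :: "nat \<Rightarrow> real"
  assumes centres: "\<And>j. j \<in> {1..d} \<Longrightarrow> M j \<in> Bset \<delta> M \<alpha> j"
begin

lemma hybrid_in_space_Wspace:
  assumes "k \<le> k'" and "u \<in> space (Wspace \<delta> M \<alpha> k')"
  shows "hybrid d k M u \<in> space (Wspace \<delta> M \<alpha> d)"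
  using assms centres by (auto simp: space_Wspace hybrid_def)

lemma measurable_hybrid:
  assumes "k \<le> k'"
  shows "hybrid d k M \<in> measurable (Wspace \<delta> M \<alpha> k') (Wspace \<delta> M \<alpha> d)"
  unfolding hybrid_def Wspace_def
proof (rule measurable_restrict)
  fix j assume j: "j \<in> {1..d}"
  have "M j \<in> space (restrict_space borel (Bset \<delta> M \<alpha> j))"
    using centres[OF j] by (simp add: space_restrict_space)
  then show "(\<lambda>u. if j \<le> k then u j else M j)
      \<in> measurable (\<Pi>\<^sub>M j\<in>{1..k'}. restrict_space borel (Bset \<delta> M \<alpha> j)) (restrict_space borel (Bset \<delta> M \<alpha> j))"
    using j assms by (cases "j \<le> k") auto
qed

lemma measurable_loss_hybrid:
  assumes "(\<lambda>(w, z). ell w z) \<in> borel_measurable (Wspace \<delta> M \<alpha> d \<Otimes>\<^sub>M Z)" and "j \<le> k"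
  shows "(\<lambda>(u, z). ell (hybrid d j M u) z) \<in> borel_measurable (Wspace \<delta> M \<alpha> k \<Otimes>\<^sub>M Z)"
  using measurable_compose[OF _ assms(1), of "\<lambda>(u, z). (hybrid d j M u, z)"] measurable_hybrid[OF assms(2)]
  by (simp add: case_prod_beta')

end

lemma hybrid_restrict: "k \<le> k' \<Longrightarrow> hybrid d k M (restrict u {1..k'}) = hybrid d k M u"
  unfolding hybrid_def by (intro ext) auto

lemma hybrid_full: "w \<in> space (Wspace \<delta> M \<alpha> d) \<Longrightarrow> hybrid d d M w = w"
  unfolding hybrid_def by (intro ext) (auto simp: space_Wspace PiE_def extensional_def)

lemma hybrid_0: "hybrid d 0 M u = restrict M {1..d}"
  unfolding hybrid_def by (intro ext) auto

lemma hybrid_Suc_eq: "i \<noteq> k \<Longrightarrow> hybrid d k M u i = hybrid d (k - 1) M u i"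
  unfolding hybrid_def by auto

lemma telescope_hybrid:
  fixes f :: "(nat \<Rightarrow> nat \<Rightarrow> nat \<Rightarrow> real) \<Rightarrow> 'a::ab_group_add"
  assumes "w \<in> space (Wspace \<delta> M \<alpha> d)"
  shows "f w = f (restrict M {1..d})
    + (\<Sum>k\<in>{1..d}. f (hybrid d k M (restrict w {1..k})) - f (hybrid d (k - 1) M (restrict w {1..k})))"
proof -
  have "(\<Sum>k\<in>{1..d}. f (hybrid d k M (restrict w {1..k})) - f (hybrid d (k - 1) M (restrict w {1..k})))
      = (\<Sum>k\<in>{1..d}. f (hybrid d k M w) - f (hybrid d (k - 1) M w))"
    by (intro sum.cong refl) (simp only: hybrid_restrict[OF order_refl] hybrid_restrict[OF diff_le_self])
  also have "\<dots> = f (hybrid d d M w) - f (hybrid d 0 M w)"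
    using sum_telescope''[of 0 d "\<lambda>k. f (hybrid d k M w)"] by simp
  finally show ?thesis
    using assms by (simp add: hybrid_full hybrid_0)
qed

lemma spec_norm_le_of_Bset:
  assumes "W \<in> Bset \<delta> M \<alpha> j"
  shows "spec_norm (\<delta> j) (\<delta> (j - 1)) W \<le> (1 + \<alpha> j) * spec_norm (\<delta> j) (\<delta> (j - 1)) (M j)"
proof -
  have "spec_norm (\<delta> j) (\<delta> (j - 1)) W = spec_norm (\<delta> j) (\<delta> (j - 1)) (\<lambda>a b. (W - M j) a b + M j a b)"
    by simp
  also have "\<dots> \<le> spec_norm (\<delta> j) (\<delta> (j - 1)) (W - M j) + spec_norm (\<delta> j) (\<delta> (j - 1)) (M j)"
    by (rule spec_norm_triangle)
  finally show ?thesis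
    using assms by (simp add: Bset_def algebra_simps)
qed

lemma prod_spec_norm_hybrid_le:
  assumes \<alpha>: "\<forall>j\<in>{1..d}. 0 \<le> \<alpha> j" and k: "k \<in> {1..d}" and u: "u \<in> space (Wspace \<delta> M \<alpha> k)"
  shows "(\<Prod>i\<in>{1..d}-{k}. spec_norm (\<delta> i) (\<delta> (i - 1)) (hybrid d k M u i))
    \<le> exp (\<Sum>i\<in>{1..<k}. \<alpha> i) * (\<Prod>i\<in>{1..d}-{k}. spec_norm (\<delta> i) (\<delta> (i - 1)) (M i))"
proof -
  have "(\<Prod>i\<in>{1..d}-{k}. spec_norm (\<delta> i) (\<delta> (i - 1)) (hybrid d k M u i))
      \<le> (\<Prod>i\<in>{1..d}-{k}. exp (if i < k then \<alpha> i else 0) * spec_norm (\<delta> i) (\<delta> (i - 1)) (M i))"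
  proof (rule prod_mono, intro conjI spec_norm_nonneg)
    fix i assume i: "i \<in> {1..d} - {k}"
    show "spec_norm (\<delta> i) (\<delta> (i - 1)) (hybrid d k M u i)
        \<le> exp (if i < k then \<alpha> i else 0) * spec_norm (\<delta> i) (\<delta> (i - 1)) (M i)"
    proof (cases "i < k")
      case True
      then have "hybrid d k M u i \<in> Bset \<delta> M \<alpha> i"
        using i u by (auto simp: hybrid_def space_Wspace)
      then have "spec_norm (\<delta> i) (\<delta> (i - 1)) (hybrid d k M u i) \<le> (1 + \<alpha> i) * spec_norm (\<delta> i) (\<delta> (i - 1)) (M i)"
        by (rule spec_norm_le_of_Bset)
      also have "\<dots> \<le> exp (\<alpha> i) * spec_norm (\<delta> i) (\<delta> (i - 1)) (M i)"
        by (intro mult_right_mono spec_norm_nonneg) (simp add: add.commute exp_ge_add_one_self)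
      finally show ?thesis
        using True by simp
    qed (use i in \<open>auto simp: hybrid_def\<close>)
  qed
  also have "\<dots> = exp (\<Sum>i\<in>{1..d}-{k}. if i < k then \<alpha> i else 0) * (\<Prod>i\<in>{1..d}-{k}. spec_norm (\<delta> i) (\<delta> (i - 1)) (M i))"
    by (simp add: prod.distrib exp_sum)
  also have "(\<Sum>i\<in>{1..d}-{k}. if i < k then \<alpha> i else 0) = (\<Sum>i\<in>{1..<k}. \<alpha> i)"
    using k by (simp add: sum.If_cases) (intro sum.cong; auto)
  finally show ?thesis .
qed

section \<open>Perturbing one layer of the network\<close>

context
  fixes d :: nat and \<delta> :: "nat \<Rightarrow> nat" and \<phi> :: "nat \<Rightarrow> (nat \<Rightarrow> real) \<Rightarrow> (nat \<Rightarrow> real)"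
  assumes \<phi>_lip: "\<forall>j\<in>{1..<d}. \<forall>u\<in>vecs (\<delta> j). \<forall>v\<in>vecs (\<delta> j).
                   vnorm (\<delta> j) (\<phi> (\<delta> j) u - \<phi> (\<delta> j) v) \<le> vnorm (\<delta> j) (u - v)"
    and \<phi>_0: "\<forall>j\<in>{1..<d}. \<phi> (\<delta> j) (\<lambda>_. 0) = (\<lambda>_. 0)"
begin

lemma vnorm_phi_diff_le:
  "1 \<le> j \<Longrightarrow> j < d \<Longrightarrow>
    vnorm (\<delta> j) (\<phi> (\<delta> j) (mat_vec (\<delta> j) c A a) - \<phi> (\<delta> j) (mat_vec (\<delta> j) c' B b))
      \<le> vnorm (\<delta> j) (mat_vec (\<delta> j) c A a - mat_vec (\<delta> j) c' B b)"
  using \<phi>_lip mat_vec_in_vecs by auto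

lemma vnorm_phi_le:
  "1 \<le> j \<Longrightarrow> j < d \<Longrightarrow>
    vnorm (\<delta> j) (\<phi> (\<delta> j) (mat_vec (\<delta> j) c A a)) \<le> vnorm (\<delta> j) (mat_vec (\<delta> j) c A a)"
  using vnorm_phi_diff_le[of j c A a c "\<lambda>_ _. 0" "\<lambda>_. 0"] \<phi>_0 by (simp add: mat_vec_def)

lemma vnorm_layers_le:
  "j < d \<Longrightarrow> vnorm (\<delta> j) (layers \<delta> \<phi> w j x)
    \<le> vnorm (\<delta> 0) x * (\<Prod>i\<in>{1..j}. spec_norm (\<delta> i) (\<delta> (i - 1)) (w i))"
proof (induction j)
  case (Suc j)
  have "vnorm (\<delta> (Suc j)) (layers \<delta> \<phi> w (Suc j) x)
     \<le> vnorm (\<delta> (Suc j)) (mat_vec (\<delta> (Suc j)) (\<delta> j) (w (Suc j)) (layers \<delta> \<phi> w j x))"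
    using vnorm_phi_le[of "Suc j"] Suc.prems by simp
  also have "\<dots> \<le> spec_norm (\<delta> (Suc j)) (\<delta> j) (w (Suc j)) * vnorm (\<delta> j) (layers \<delta> \<phi> w j x)"
    by (rule vnorm_mat_vec_le)
  also have "\<dots> \<le> spec_norm (\<delta> (Suc j)) (\<delta> j) (w (Suc j))
      * (vnorm (\<delta> 0) x * (\<Prod>i\<in>{1..j}. spec_norm (\<delta> i) (\<delta> (i - 1)) (w i)))"
    using Suc by (intro mult_left_mono spec_norm_nonneg) auto
  finally show ?case
    by (simp add: prod.nat_ivl_Suc' mult_ac)
qed simp

lemma layers_eq: "(\<And>i. i \<noteq> k \<Longrightarrow> w i = w' i) \<Longrightarrow> j < k \<Longrightarrow> layers \<delta> \<phi> w j x = layers \<delta> \<phi> w' j x"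
  by (induction j) auto

lemma vnorm_layers_diff_le:
  assumes ww: "\<And>i. i \<noteq> k \<Longrightarrow> w i = w' i" and "1 \<le> k" "k \<le> j" "j < d"
  shows "vnorm (\<delta> j) (layers \<delta> \<phi> w j x - layers \<delta> \<phi> w' j x)
     \<le> vnorm (\<delta> 0) x * (\<Prod>i\<in>{1..j}-{k}. spec_norm (\<delta> i) (\<delta> (i - 1)) (w i))
        * spec_norm (\<delta> k) (\<delta> (k - 1)) (w k - w' k)"
  using assms(2-)
proof (induction j)
  case (Suc j)
  define a where "a = layers \<delta> \<phi> w j x"
  define b where "b = layers \<delta> \<phi> w' j x"
  have "vnorm (\<delta> (Suc j)) (layers \<delta> \<phi> w (Suc j) x - layers \<delta> \<phi> w' (Suc j) x)
      \<le> vnorm (\<delta> (Suc j)) (mat_vec (\<delta> (Suc j)) (\<delta> j) (w (Suc j)) a - mat_vec (\<delta> (Suc j)) (\<delta> j) (w' (Suc j)) b)"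
    using vnorm_phi_diff_le[of "Suc j"] Suc.prems by (simp add: a_def b_def)
  also have "\<dots> \<le> vnorm (\<delta> 0) x * (\<Prod>i\<in>{1..Suc j}-{k}. spec_norm (\<delta> i) (\<delta> (i - 1)) (w i))
        * spec_norm (\<delta> k) (\<delta> (k - 1)) (w k - w' k)"
  proof (cases "Suc j = k")
    case True
    have "a = b"
      unfolding a_def b_def using True by (intro layers_eq[OF ww]) auto
    have k: "{1..Suc j} - {k} = {1..j}" "\<delta> (k - 1) = \<delta> j"
      using True by auto
    from \<open>a = b\<close> have "vnorm (\<delta> k) (mat_vec (\<delta> k) (\<delta> j) (w k) a - mat_vec (\<delta> k) (\<delta> j) (w' k) b)
        \<le> spec_norm (\<delta> k) (\<delta> j) (w k - w' k) * vnorm (\<delta> j) a"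
      using vnorm_mat_vec_le[of "\<delta> k" "\<delta> j" "w k - w' k" a] by (simp only: mat_vec_diff_left)
    also have "\<dots> \<le> spec_norm (\<delta> k) (\<delta> j) (w k - w' k)
        * (vnorm (\<delta> 0) x * (\<Prod>i\<in>{1..j}. spec_norm (\<delta> i) (\<delta> (i - 1)) (w i)))"
      unfolding a_def using Suc.prems by (intro mult_left_mono spec_norm_nonneg vnorm_layers_le) auto
    finally show ?thesis
      unfolding k by (simp only: True mult_ac)
  next
    case False
    then have "w' (Suc j) = w (Suc j)" and "{1..Suc j} - {k} = insert (Suc j) ({1..j} - {k})"
      using ww Suc.prems by auto
    then have "vnorm (\<delta> (Suc j)) (mat_vec (\<delta> (Suc j)) (\<delta> j) (w (Suc j)) a - mat_vec (\<delta> (Suc j)) (\<delta> j) (w' (Suc j)) b)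
        \<le> spec_norm (\<delta> (Suc j)) (\<delta> j) (w (Suc j)) * vnorm (\<delta> j) (a - b)"
      using vnorm_mat_vec_le by (simp flip: mat_vec_diff_right)
    also have "\<dots> \<le> spec_norm (\<delta> (Suc j)) (\<delta> j) (w (Suc j)) * (vnorm (\<delta> 0) x
        * (\<Prod>i\<in>{1..j}-{k}. spec_norm (\<delta> i) (\<delta> (i - 1)) (w i)) * spec_norm (\<delta> k) (\<delta> (k - 1)) (w k - w' k))"
      unfolding a_def b_def by (intro mult_left_mono spec_norm_nonneg Suc.IH) (use Suc.prems False in auto)
    finally show ?thesis
      using \<open>{1..Suc j} - {k} = _\<close> by (simp add: mult_ac)
  qed
  finally show ?case .
qed simp

context
  fixes \<phi>o :: "(nat \<Rightarrow> real) \<Rightarrow> (nat \<Rightarrow> real)"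
  assumes d: "2 \<le> d" and \<phi>o: "\<phi>o = id \<or> \<phi>o = softmax (\<delta> d)"
begin

lemma vnorm_net_diff_le:
  assumes ww: "\<And>i. i \<noteq> k \<Longrightarrow> w i = w' i" and k: "1 \<le> k" "k \<le> d"
  shows "vnorm (\<delta> d) (net d \<delta> \<phi> \<phi>o w x - net d \<delta> \<phi> \<phi>o w' x)
     \<le> vnorm (\<delta> 0) x * (\<Prod>i\<in>{1..d}-{k}. spec_norm (\<delta> i) (\<delta> (i - 1)) (w i))
        * spec_norm (\<delta> k) (\<delta> (k - 1)) (w k - w' k)"
proof -
  define a where "a = layers \<delta> \<phi> w (d - 1) x"
  define b where "b = layers \<delta> \<phi> w' (d - 1) x"
  have "vnorm (\<delta> d) (net d \<delta> \<phi> \<phi>o w x - net d \<delta> \<phi> \<phi>o w' x)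
     \<le> vnorm (\<delta> d) (mat_vec (\<delta> d) (\<delta> (d - 1)) (w d) a - mat_vec (\<delta> d) (\<delta> (d - 1)) (w' d) b)"
    unfolding net_def a_def b_def using \<phi>o softmax_lipschitz by auto
  also have "\<dots> \<le> vnorm (\<delta> 0) x * (\<Prod>i\<in>{1..d}-{k}. spec_norm (\<delta> i) (\<delta> (i - 1)) (w i))
        * spec_norm (\<delta> k) (\<delta> (k - 1)) (w k - w' k)"
  proof (cases "k = d")
    case True
    have "a = b"
      unfolding a_def b_def using True d by (intro layers_eq[OF ww]) auto
    then have "vnorm (\<delta> d) (mat_vec (\<delta> d) (\<delta> (d - 1)) (w d) a - mat_vec (\<delta> d) (\<delta> (d - 1)) (w' d) b)
        \<le> spec_norm (\<delta> d) (\<delta> (d - 1)) (w d - w' d) * vnorm (\<delta> (d - 1)) a"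
      using vnorm_mat_vec_le[of "\<delta> d" "\<delta> (d - 1)" "w d - w' d" a] by (simp only: mat_vec_diff_left)
    also have "\<dots> \<le> spec_norm (\<delta> d) (\<delta> (d - 1)) (w d - w' d)
        * (vnorm (\<delta> 0) x * (\<Prod>i\<in>{1..d-1}. spec_norm (\<delta> i) (\<delta> (i - 1)) (w i)))"
      unfolding a_def using d by (intro mult_left_mono spec_norm_nonneg vnorm_layers_le) auto
    also have "{1..d-1} = {1..d} - {k}"
      using True d by auto
    finally show ?thesis
      using True by (simp only: mult_ac)
  next
    case False
    have "w' d = w d"
      using ww False by auto
    have prod_d: "(\<Prod>i\<in>{1..d}-{k}. spec_norm (\<delta> i) (\<delta> (i - 1)) (w i))
        = spec_norm (\<delta> d) (\<delta> (d - 1)) (w d) * (\<Prod>i\<in>{1..d-1}-{k}. spec_norm (\<delta> i) (\<delta> (i - 1)) (w i))"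
      using False d by (subst prod.remove[of _ d]) (auto intro!: prod.cong)
    from \<open>w' d = w d\<close> have "vnorm (\<delta> d) (mat_vec (\<delta> d) (\<delta> (d - 1)) (w d) a - mat_vec (\<delta> d) (\<delta> (d - 1)) (w' d) b)
        \<le> spec_norm (\<delta> d) (\<delta> (d - 1)) (w d) * vnorm (\<delta> (d - 1)) (a - b)"
      using vnorm_mat_vec_le by (simp flip: mat_vec_diff_right)
    also have "\<dots> \<le> spec_norm (\<delta> d) (\<delta> (d - 1)) (w d) * (vnorm (\<delta> 0) x
        * (\<Prod>i\<in>{1..d-1}-{k}. spec_norm (\<delta> i) (\<delta> (i - 1)) (w i)) * spec_norm (\<delta> k) (\<delta> (k - 1)) (w k - w' k))"
      unfolding a_def b_def using d k False
      by (intro mult_left_mono spec_norm_nonneg vnorm_layers_diff_le[OF ww]) auto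
    finally show ?thesis
      unfolding prod_d by (simp only: mult_ac)
  qed
  finally show ?thesis .
qed

lemma vnorm_net_hybrid_diff_le:
  assumes \<alpha>: "\<forall>j\<in>{1..d}. 0 \<le> \<alpha> j" and k: "k \<in> {1..d}" and u: "u \<in> space (Wspace \<delta> M \<alpha> k)" and x: "vnorm (\<delta> 0) x \<le> R"
  shows "vnorm (\<delta> d) (net d \<delta> \<phi> \<phi>o (hybrid d k M u) x - net d \<delta> \<phi> \<phi>o (hybrid d (k - 1) M u) x)
    \<le> (\<Prod>j=1..d. spec_norm (\<delta> j) (\<delta> (j - 1)) (M j)) * R * beta \<alpha> k"
proof -
  define sn where "sn = (\<lambda>j A. spec_norm (\<delta> j) (\<delta> (j - 1)) A)"
  define rest where "rest = (\<Prod>i\<in>{1..d}-{k}. sn i (M i))"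
  have sn: "0 \<le> sn j A" for j A
    by (simp add: sn_def spec_norm_nonneg)
  have "sn k (hybrid d k M u k - hybrid d (k - 1) M u k) = sn k (u k - M k)"
    using k by (auto simp: hybrid_def)
  also have "\<dots> \<le> \<alpha> k * sn k (M k)"
    using u k by (auto simp: space_Wspace Bset_def sn_def)
  finally have layer_k: "sn k (hybrid d k M u k - hybrid d (k - 1) M u k) \<le> \<alpha> k * sn k (M k)" .
  have others: "(\<Prod>i\<in>{1..d}-{k}. sn i (hybrid d k M u i)) \<le> exp (\<Sum>i\<in>{1..<k}. \<alpha> i) * rest"
    unfolding sn_def rest_def by (rule prod_spec_norm_hybrid_le[OF \<alpha> k u])
  have R: "0 \<le> R"
    by (rule order_trans[OF vnorm_nonneg x])
  have rest: "0 \<le> rest"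
    unfolding rest_def using sn by (intro prod_nonneg) auto
  have prod_centres: "(\<Prod>j=1..d. sn j (M j)) = sn k (M k) * rest"
    unfolding rest_def using k by (intro prod.remove) auto
  have "vnorm (\<delta> d) (net d \<delta> \<phi> \<phi>o (hybrid d k M u) x - net d \<delta> \<phi> \<phi>o (hybrid d (k - 1) M u) x)
      \<le> vnorm (\<delta> 0) x * (\<Prod>i\<in>{1..d}-{k}. sn i (hybrid d k M u i))
        * sn k (hybrid d k M u k - hybrid d (k - 1) M u k)"
    unfolding sn_def using k by (intro vnorm_net_diff_le hybrid_Suc_eq) auto
  also have "\<dots> \<le> R * (exp (\<Sum>i\<in>{1..<k}. \<alpha> i) * rest) * (\<alpha> k * sn k (M k))"
    using x others layer_k sn R rest by (intro mult_mono prod_nonneg mult_nonneg_nonneg) auto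
  also have "\<dots> = (\<Prod>j=1..d. sn j (M j)) * R * beta \<alpha> k"
    unfolding prod_centres beta_def by (simp only: mult_ac)
  finally show ?thesis
    by (simp add: sn_def)
qed

lemma abs_loss_hybrid_diff_le:
  fixes loss :: "(nat \<Rightarrow> nat \<Rightarrow> nat \<Rightarrow> real) \<Rightarrow> real"
  assumes lip: "\<And>w w'. w \<in> space (Wspace \<delta> M \<alpha> d) \<Longrightarrow> w' \<in> space (Wspace \<delta> M \<alpha> d)
      \<Longrightarrow> \<bar>loss w - loss w'\<bar> \<le> L * vnorm (\<delta> d) (net d \<delta> \<phi> \<phi>o w x - net d \<delta> \<phi> \<phi>o w' x)"
    and L: "0 \<le> L" and \<alpha>: "\<forall>j\<in>{1..d}. 0 \<le> \<alpha> j" and centres: "\<And>j. j \<in> {1..d} \<Longrightarrow> M j \<in> Bset \<delta> M \<alpha> j"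
    and k: "k \<in> {1..d}" and u: "u \<in> space (Wspace \<delta> M \<alpha> k)" and x: "vnorm (\<delta> 0) x \<le> R"
  shows "\<bar>loss (hybrid d k M u) - loss (hybrid d (k - 1) M u)\<bar>
    \<le> L * (\<Prod>j=1..d. spec_norm (\<delta> j) (\<delta> (j - 1)) (M j)) * R * beta \<alpha> k"
proof -
  have "hybrid d k M u \<in> space (Wspace \<delta> M \<alpha> d)" "hybrid d (k - 1) M u \<in> space (Wspace \<delta> M \<alpha> d)"
    by (rule hybrid_in_space_Wspace[OF centres _ u]; simp)+
  then have "\<bar>loss (hybrid d k M u) - loss (hybrid d (k - 1) M u)\<bar>
      \<le> L * vnorm (\<delta> d) (net d \<delta> \<phi> \<phi>o (hybrid d k M u) x - net d \<delta> \<phi> \<phi>o (hybrid d (k - 1) M u) x)"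
    by (rule lip)
  also have "\<dots> \<le> L * ((\<Prod>j=1..d. spec_norm (\<delta> j) (\<delta> (j - 1)) (M j)) * R * beta \<alpha> k)"
    using L by (intro mult_left_mono vnorm_net_hybrid_diff_le[OF \<alpha> k u x])
  finally show ?thesis
    by (simp only: mult.assoc)
qed

end

end

section \<open>Generalization gap of a fixed hypothesis\<close>

definition gen_gap :: "nat \<Rightarrow> 'z measure \<Rightarrow> ('z \<Rightarrow> real) \<Rightarrow> (nat \<Rightarrow> 'z) \<Rightarrow> real" where
  "gen_gap n \<mu> f s = (\<integral>z. f z \<partial>\<mu>) - (1 / real n) * (\<Sum>i<n. f (s i))"

lemma gen_gap_cong:
  "(\<And>z. z \<in> space \<mu> \<Longrightarrow> f z = g z) \<Longrightarrow> (\<And>i. i < n \<Longrightarrow> s i \<in> space \<mu>)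
    \<Longrightarrow> gen_gap n \<mu> f s = gen_gap n \<mu> g s"
  unfolding gen_gap_def by (metis (no_types, lifting) Bochner_Integration.integral_cong lessThan_iff sum.cong)

lemma gen_gap_add:
  "integrable \<mu> f \<Longrightarrow> integrable \<mu> g
    \<Longrightarrow> gen_gap n \<mu> (\<lambda>z. f z + g z) s = gen_gap n \<mu> f s + gen_gap n \<mu> g s"
  by (simp add: gen_gap_def sum.distrib algebra_simps)

lemma gen_gap_sum:
  "(\<And>k. k \<in> A \<Longrightarrow> integrable \<mu> (f k))
    \<Longrightarrow> gen_gap n \<mu> (\<lambda>z. \<Sum>k\<in>A. f k z) s = (\<Sum>k\<in>A. gen_gap n \<mu> (f k) s)"
  by (simp add: gen_gap_def sum_subtractf sum_distrib_left sum.swap[of _ A])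

lemma gen_gap_nonpos:
  "\<not> integrable \<mu> f \<Longrightarrow> (\<And>i. i < n \<Longrightarrow> 0 \<le> f (s i)) \<Longrightarrow> gen_gap n \<mu> f s \<le> 0"
  by (auto simp: gen_gap_def not_integrable_integral_eq intro!: divide_nonneg_nonneg sum_nonneg)

lemma gen_gap_decompose:
  assumes "integrable \<mu> f\<^sub>0" and "\<And>k. k \<in> A \<Longrightarrow> integrable \<mu> (g k)"
    and "\<And>z. z \<in> space \<mu> \<Longrightarrow> f z = f\<^sub>0 z + (\<Sum>k\<in>A. g k z)" and "\<And>i. i < n \<Longrightarrow> s i \<in> space \<mu>"
  shows "gen_gap n \<mu> f s = gen_gap n \<mu> f\<^sub>0 s + (\<Sum>k\<in>A. gen_gap n \<mu> (g k) s)"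
proof -
  have "gen_gap n \<mu> f s = gen_gap n \<mu> (\<lambda>z. f\<^sub>0 z + (\<Sum>k\<in>A. g k z)) s"
    using assms(3,4) by (rule gen_gap_cong)
  also have "\<dots> = gen_gap n \<mu> f\<^sub>0 s + (\<Sum>k\<in>A. gen_gap n \<mu> (g k) s)"
    using assms(1,2) by (simp add: gen_gap_add gen_gap_sum Bochner_Integration.integrable_sum)
  finally show ?thesis .
qed

lemma not_integrable_decompose:
  assumes "\<not> integrable \<mu> f\<^sub>0" and "\<And>k. k \<in> A \<Longrightarrow> integrable \<mu> (g k)"
    and "\<And>z. z \<in> space \<mu> \<Longrightarrow> f z = f\<^sub>0 z + (\<Sum>k\<in>A. g k z)"
  shows "\<not> integrable \<mu> f"
proof
  assume "integrable \<mu> f"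
  then have "integrable \<mu> (\<lambda>z. f z - (\<Sum>k\<in>A. g k z))"
    using assms(2) by auto
  also have "?this \<longleftrightarrow> integrable \<mu> f\<^sub>0"
    using assms(3) by (intro Bochner_Integration.integrable_cong) auto
  finally show False
    using assms(1) by simp
qed

lemma abs_gen_gap_le:
  assumes "prob_space \<mu>" and "f \<in> borel_measurable \<mu>" and f: "\<And>z. z \<in> space \<mu> \<Longrightarrow> \<bar>f z\<bar> \<le> B"
    and s: "\<And>i. i < n \<Longrightarrow> s i \<in> space \<mu>"
  shows "\<bar>gen_gap n \<mu> f s\<bar> \<le> 2 * B"
proof -
  interpret prob_space \<mu> by fact
  obtain z where "z \<in> space \<mu>"
    using not_empty by blast
  with f have "0 \<le> B"
    by (meson abs_ge_zero order_trans)
  have "integrable \<mu> f"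
    using f assms(2) by (intro integrable_const_bound[where B=B] AE_I2) auto
  then have "(\<integral>z. f z \<partial>\<mu>) \<le> B" and "-B \<le> (\<integral>z. f z \<partial>\<mu>)"
    using f by (auto intro!: integral_le_const integral_ge_const AE_I2 simp: abs_le_iff minus_le_iff)
  moreover have "\<bar>\<Sum>i<n. f (s i)\<bar> \<le> real n * B"
    using order.trans[OF sum_abs sum_mono[of "{..<n}" "\<lambda>i. \<bar>f (s i)\<bar>" "\<lambda>_. B"]] f s by simp
  then have "\<bar>(1 / real n) * (\<Sum>i<n. f (s i))\<bar> \<le> B"
    using \<open>0 \<le> B\<close> by (cases "n = 0") (simp_all add: abs_mult field_simps)
  ultimately show ?thesis
    unfolding gen_gap_def by linarith
qed

lemma measurable_gen_gap:
  assumes "sigma_finite_measure \<mu>" and "(\<lambda>(u, z). \<Delta> u z) \<in> borel_measurable (V \<Otimes>\<^sub>M \<mu>)"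
  shows "(\<lambda>p. gen_gap n \<mu> (\<Delta> (snd p)) (fst p)) \<in> borel_measurable ((\<Pi>\<^sub>M i\<in>{..<n}. \<mu>) \<Otimes>\<^sub>M V)"
proof -
  interpret sigma_finite_measure \<mu> by fact
  note [measurable] = assms(2)
  have [measurable]: "(\<lambda>u. \<integral>z. \<Delta> u z \<partial>\<mu>) \<in> borel_measurable V"
    by (rule borel_measurable_lebesgue_integral) simp
  show ?thesis
    unfolding gen_gap_def by measurable
qed

lemma
  assumes "prob_space \<mu>" and "integrable \<mu> f"
  shows integrable_gen_gap_PiM: "integrable (\<Pi>\<^sub>M i\<in>{..<n}. \<mu>) (gen_gap n \<mu> f)"
    and integral_gen_gap_PiM: "0 < n \<Longrightarrow> (\<integral>s. gen_gap n \<mu> f s \<partial>(\<Pi>\<^sub>M i\<in>{..<n}. \<mu>)) = 0"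
proof -
  interpret \<mu>: prob_space \<mu> by fact
  interpret S: prob_space "\<Pi>\<^sub>M i\<in>{..<n}. \<mu>"
    by (intro prob_space_PiM) (simp add: \<mu>.prob_space_axioms)
  have coord: "(\<lambda>s. s i) \<in> measurable (\<Pi>\<^sub>M i\<in>{..<n}. \<mu>) \<mu>"
    and law: "distr (\<Pi>\<^sub>M i\<in>{..<n}. \<mu>) \<mu> (\<lambda>s. s i) = \<mu>" if "i < n" for i
    using that by (auto intro!: distr_PiM_component simp: \<mu>.prob_space_axioms)
  have f: "f \<in> borel_measurable \<mu>"
    using assms(2) by simp
  have int: "integrable (\<Pi>\<^sub>M i\<in>{..<n}. \<mu>) (\<lambda>s. f (s i))" if "i < n" for i
    using integrable_distr_eq[OF coord[OF that] f] law[OF that] assms(2) by simp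
  have mean: "(\<integral>s. f (s i) \<partial>(\<Pi>\<^sub>M i\<in>{..<n}. \<mu>)) = (\<integral>z. f z \<partial>\<mu>)" if "i < n" for i
    using integral_distr[OF coord[OF that] f] law[OF that] by simp
  show "integrable (\<Pi>\<^sub>M i\<in>{..<n}. \<mu>) (gen_gap n \<mu> f)"
    unfolding gen_gap_def
    by (intro Bochner_Integration.integrable_diff Bochner_Integration.integrable_mult_right
        Bochner_Integration.integrable_sum S.integrable_const int) auto
  have "(\<integral>s. gen_gap n \<mu> f s \<partial>(\<Pi>\<^sub>M i\<in>{..<n}. \<mu>))
      = (\<integral>z. f z \<partial>\<mu>) - (1 / real n) * (\<Sum>i<n. \<integral>s. f (s i) \<partial>(\<Pi>\<^sub>M i\<in>{..<n}. \<mu>))"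
    unfolding gen_gap_def using int
    by (subst Bochner_Integration.integral_diff)
      (auto simp: S.prob_space Bochner_Integration.integral_sum intro!: Bochner_Integration.integrable_sum)
  then show "(\<integral>s. gen_gap n \<mu> f s \<partial>(\<Pi>\<^sub>M i\<in>{..<n}. \<mu>)) = 0" if "0 < n"
    using that by (simp add: mean)
qed

lemma Hoeffding_gen_gap:
  assumes \<mu>: "prob_space \<mu>" and f: "f \<in> borel_measurable \<mu>" and B: "\<And>z. z \<in> space \<mu> \<Longrightarrow> \<bar>f z\<bar> \<le> B"
    and l: "0 < l" and n: "0 < n"
  shows "(\<integral>\<^sup>+s. ennreal (exp (l * gen_gap n \<mu> f s)) \<partial>(\<Pi>\<^sub>M i\<in>{..<n}. \<mu>))
    \<le> ennreal (exp (l\<^sup>2 * B\<^sup>2 / (2 * real n)))"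
proof -
  interpret prob_space \<mu> by fact
  interpret product_sigma_finite "\<lambda>_. \<mu>"
    by (simp add: product_sigma_finite_def sigma_finite_measure_axioms)
  interpret bounded: interval_bounded_random_variable \<mu> "\<lambda>z. - f z" "-B" B
    by unfold_locales (use f B in \<open>auto intro!: AE_I2 simp: abs_le_iff\<close>)
  define c where "c = (\<integral>z. f z \<partial>\<mu>)"
  define l' where "l' = l / real n"
  have "0 < l'"
    using l n by (simp add: l'_def)
  have "l * gen_gap n \<mu> f s = (\<Sum>i<n. l' * (c - f (s i)))" for s
  proof -
    have "(\<Sum>i<n. l' * (c - f (s i))) = real n * l' * c - l' * (\<Sum>i<n. f (s i))"
      by (simp add: right_diff_distrib sum_subtractf sum_distrib_left)
    also have "\<dots> = l * gen_gap n \<mu> f s"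
      using n by (simp add: gen_gap_def c_def l'_def field_simps)
    finally show ?thesis ..
  qed
  then have "(\<integral>\<^sup>+s. ennreal (exp (l * gen_gap n \<mu> f s)) \<partial>(\<Pi>\<^sub>M i\<in>{..<n}. \<mu>))
      = (\<integral>\<^sup>+s. (\<Prod>i<n. ennreal (exp (l' * (c - f (s i))))) \<partial>(\<Pi>\<^sub>M i\<in>{..<n}. \<mu>))"
    by (simp add: exp_sum prod_ennreal)
  also have "\<dots> = (\<Prod>i<n. \<integral>\<^sup>+z. ennreal (exp (l' * (c - f z))) \<partial>\<mu>)"
    using f by (intro product_nn_integral_prod) auto
  also have "\<dots> \<le> (\<Prod>i<n. ennreal (exp (l'\<^sup>2 * (B - - B)\<^sup>2 / 8)))"
    using bounded.Hoeffdings_lemma_nn_integral[OF \<open>0 < l'\<close>]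
    by (intro prod_mono_ennreal) (simp add: c_def)
  also have "\<dots> = ennreal (exp (l'\<^sup>2 * (B - - B)\<^sup>2 / 8) ^ n)"
    by (simp add: ennreal_power)
  also have "exp (l'\<^sup>2 * (B - - B)\<^sup>2 / 8) ^ n = exp (l\<^sup>2 * B\<^sup>2 / (2 * real n))"
    unfolding exp_of_nat_mult[symmetric] using n by (simp add: l'_def power2_eq_square field_simps)
  finally show ?thesis .
qed

lemma nn_integral_exp_gen_gap_le:
  fixes \<Delta> :: "'v \<Rightarrow> 'z \<Rightarrow> real"
  assumes \<mu>: "prob_space \<mu>" and V: "prob_space V"
    and \<Delta>: "(\<lambda>(u, z). \<Delta> u z) \<in> borel_measurable (V \<Otimes>\<^sub>M \<mu>)"
    and B: "\<And>u z. u \<in> space V \<Longrightarrow> z \<in> space \<mu> \<Longrightarrow> \<bar>\<Delta> u z\<bar> \<le> B"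
    and l: "0 < l" and n: "0 < n"
  shows "(\<integral>\<^sup>+p. ennreal (exp (l * gen_gap n \<mu> (\<Delta> (snd p)) (fst p) - l\<^sup>2 * B\<^sup>2 / (2 * real n)))
    \<partial>((\<Pi>\<^sub>M i\<in>{..<n}. \<mu>) \<Otimes>\<^sub>M V)) \<le> 1"
proof -
  interpret \<mu>: prob_space \<mu> by fact
  interpret V: prob_space V by fact
  interpret S: prob_space "\<Pi>\<^sub>M i\<in>{..<n}. \<mu>"
    by (intro prob_space_PiM) (simp add: \<mu>.prob_space_axioms)
  interpret SV: pair_prob_space "\<Pi>\<^sub>M i\<in>{..<n}. \<mu>" V ..
  define c where "c = l\<^sup>2 * B\<^sup>2 / (2 * real n)"
  note [measurable] = measurable_gen_gap[OF \<mu>.sigma_finite_measure_axioms \<Delta>]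
  have "(\<integral>\<^sup>+s. ennreal (exp (l * gen_gap n \<mu> (\<Delta> u) s - c)) \<partial>(\<Pi>\<^sub>M i\<in>{..<n}. \<mu>)) \<le> 1"
    if u: "u \<in> space V" for u
  proof -
    have \<Delta>u: "\<Delta> u \<in> borel_measurable \<mu>"
      using measurable_Pair2[OF \<Delta> u] by simp
    have [measurable]: "(\<lambda>s. gen_gap n \<mu> (\<Delta> u) s) \<in> borel_measurable (\<Pi>\<^sub>M i\<in>{..<n}. \<mu>)"
      using measurable_compose[OF measurable_Pair2'[OF u] measurable_gen_gap[OF \<mu>.sigma_finite_measure_axioms \<Delta>]]
      by simp
    have "(\<integral>\<^sup>+s. ennreal (exp (l * gen_gap n \<mu> (\<Delta> u) s - c)) \<partial>(\<Pi>\<^sub>M i\<in>{..<n}. \<mu>))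
        = (\<integral>\<^sup>+s. ennreal (exp (l * gen_gap n \<mu> (\<Delta> u) s)) * ennreal (exp (- c)) \<partial>(\<Pi>\<^sub>M i\<in>{..<n}. \<mu>))"
      by (simp add: exp_diff exp_minus divide_inverse flip: ennreal_mult)
    also have "\<dots> = (\<integral>\<^sup>+s. ennreal (exp (l * gen_gap n \<mu> (\<Delta> u) s)) \<partial>(\<Pi>\<^sub>M i\<in>{..<n}. \<mu>)) * ennreal (exp (- c))"
      by (rule nn_integral_multc) measurable
    also have "\<dots> \<le> ennreal (exp c) * ennreal (exp (- c))"
      unfolding c_def using B u by (intro mult_right_mono Hoeffding_gen_gap[OF \<mu> \<Delta>u _ l n]) auto
    also have "\<dots> = 1"
      by (simp flip: ennreal_mult exp_add)
    finally show ?thesis .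
  qed
  then have "(\<integral>\<^sup>+u. \<integral>\<^sup>+s. ennreal (exp (l * gen_gap n \<mu> (\<Delta> u) s - c)) \<partial>(\<Pi>\<^sub>M i\<in>{..<n}. \<mu>) \<partial>V) \<le> 1"
    using nn_integral_mono[of V _ "\<lambda>_. 1"] by (simp add: V.emeasure_space_1)
  then show ?thesis
    by (subst SV.nn_integral_snd[symmetric]) (simp_all add: c_def)
qed

section \<open>A change-of-measure inequality for the KL divergence\<close>

context
  fixes P Q :: "'a measure"
  assumes Q: "sigma_finite_measure Q" and P: "sigma_finite_measure P"
    and sets: "sets P = sets Q" and ac: "absolutely_continuous Q P"
begin

lemma AE_RN_deriv_pos: "AE x in P. 0 < enn2real (RN_deriv Q P x)"
proof -
  interpret Q: sigma_finite_measure Q by (rule Q)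
  have "AE x in Q. RN_deriv Q P x \<noteq> \<infinity>"
    using Q.RN_deriv_finite[OF P ac sets] .
  then have "AE x in density Q (RN_deriv Q P). 0 < RN_deriv Q P x \<and> RN_deriv Q P x \<noteq> \<infinity>"
    by (subst AE_density) (auto elim: eventually_mono)
  then show ?thesis
    unfolding Q.density_RN_deriv[OF ac sets]
    by (rule eventually_mono) (auto simp: enn2real_positive_iff top.not_eq_extremum)
qed

lemma nn_integral_divide_RN_deriv_le:
  assumes f: "f \<in> borel_measurable Q"
  shows "(\<integral>\<^sup>+x. ennreal (f x / enn2real (RN_deriv Q P x)) \<partial>P) \<le> (\<integral>\<^sup>+x. ennreal (f x) \<partial>Q)"
proof -
  interpret Q: sigma_finite_measure Q by (rule Q)
  note [measurable] = f
  have "(\<integral>\<^sup>+x. ennreal (f x / enn2real (RN_deriv Q P x)) \<partial>P)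
      = (\<integral>\<^sup>+x. RN_deriv Q P x * ennreal (f x / enn2real (RN_deriv Q P x)) \<partial>Q)"
    by (subst Q.density_RN_deriv[OF ac sets, symmetric]) (rule nn_integral_density; measurable)
  also have "\<dots> \<le> (\<integral>\<^sup>+x. ennreal (f x) \<partial>Q)"
    using Q.RN_deriv_finite[OF P ac sets]
  proof (intro nn_integral_mono_AE, elim eventually_mono)
    fix x assume "RN_deriv Q P x \<noteq> \<infinity>"
    then obtain r where "RN_deriv Q P x = ennreal r" and "0 \<le> r"
      by (cases "RN_deriv Q P x") auto
    then show "RN_deriv Q P x * ennreal (f x / enn2real (RN_deriv Q P x)) \<le> ennreal (f x)"
      by (cases "r = 0") (simp_all flip: ennreal_mult')
  qed
  finally show ?thesis .
qed

end

text \<open>A half of the Donsker--Varadhan variational formula: \<open>\<integral> g dP \<le> D(P \<parallel> Q)\<close> whenever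
  \<open>\<integral> exp g dQ \<le> 1\<close>.  Note that the library's \<open>KL_divergence b Q P\<close> is \<open>D(P \<parallel> Q)\<close>.\<close>

lemma integral_le_KL_divergence:
  fixes g :: "'a \<Rightarrow> real"
  assumes Q: "prob_space Q" and P: "prob_space P" and sets: "sets P = sets Q"
    and ac: "absolutely_continuous Q P" and int: "integrable P (entropy_density (exp 1) Q P)"
    and g: "g \<in> borel_measurable Q" and intg: "integrable P g"
    and exp_g: "(\<integral>\<^sup>+x. ennreal (exp (g x)) \<partial>Q) \<le> 1"
  shows "integral\<^sup>L P g \<le> KL_divergence (exp 1) Q P"
proof -
  interpret P: prob_space P by fact
  have sf: "sigma_finite_measure Q" "sigma_finite_measure P"
    using Q P by (simp_all add: prob_space_imp_sigma_finite)
  define \<rho> where "\<rho> = (\<lambda>x. enn2real (RN_deriv Q P x))"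
  define h where "h = (\<lambda>x. exp (g x) / \<rho> x)"
  have [measurable]: "g \<in> borel_measurable P"
    using g sets by (simp cong: measurable_cong_sets)
  have [measurable]: "\<rho> \<in> borel_measurable P"
    using sets unfolding \<rho>_def by (simp cong: measurable_cong_sets)
  have h0: "0 \<le> h x" for x
    by (simp add: h_def \<rho>_def)
  have "(\<integral>\<^sup>+x. ennreal (h x) \<partial>P) \<le> 1"
    using nn_integral_divide_RN_deriv_le[OF sf sets ac, of "\<lambda>x. exp (g x)"] g exp_g
    unfolding h_def \<rho>_def by simp
  moreover have inth: "integrable P h"
    using calculation h0 by (intro integrableI_nonneg) (auto simp: h_def top.not_eq_extremum intro: le_less_trans)
  ultimately have "integral\<^sup>L P h \<le> 1"
    using nn_integral_eq_integral[OF inth] h0 by simp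
  \<comment> \<open>pointwise, \<open>g - ln \<rho> = ln h \<le> h - 1\<close>\<close>
  moreover have "AE x in P. g x - entropy_density (exp 1) Q P x \<le> h x - 1"
    using AE_RN_deriv_pos[OF sf sets ac]
  proof (elim eventually_mono)
    fix x assume "0 < enn2real (RN_deriv Q P x)"
    then show "g x - entropy_density (exp 1) Q P x \<le> h x - 1"
      using ln_le_minus_one[of "h x"] by (simp add: h_def \<rho>_def entropy_density_def log_def ln_div)
  qed
  then have "(\<integral>x. g x - entropy_density (exp 1) Q P x \<partial>P) \<le> (\<integral>x. h x - 1 \<partial>P)"
    using intg int inth by (intro integral_mono_AE) auto
  moreover have "(\<integral>x. g x - entropy_density (exp 1) Q P x \<partial>P) = integral\<^sup>L P g - KL_divergence (exp 1) Q P"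
    unfolding KL_divergence_def using intg int by simp
  moreover have "(\<integral>x. h x - 1 \<partial>P) = integral\<^sup>L P h - 1"
    using inth by (simp add: P.prob_space)
  ultimately show ?thesis
    by linarith
qed

lemma KL_divergence_nonneg:
  assumes "prob_space Q" "prob_space P" "sets P = sets Q" "absolutely_continuous Q P"
    "integrable P (entropy_density (exp 1) Q P)"
  shows "0 \<le> KL_divergence (exp 1) Q P"
proof -
  have "integral\<^sup>L P (\<lambda>_. 0) \<le> KL_divergence (exp 1) Q P"
    by (rule integral_le_KL_divergence[OF assms]) (simp_all add: prob_space.emeasure_space_1[OF assms(1)])
  then show ?thesis
    by simp
qed

section \<open>Mutual-information bound for a bounded loss\<close>

lemma le_two_sqrt_of_quadratic_bound:
  fixes E I c :: real
  assumes H: "\<And>l. 0 < l \<Longrightarrow> l * E \<le> I + l\<^sup>2 * c" and I: "0 \<le> I" and c: "0 < c"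
  shows "E \<le> 2 * sqrt (I * c)"
proof (cases "I = 0")
  case True
  have "E \<le> l * c" if "0 < l" for l
    using H[OF that] True that by (simp add: power2_eq_square mult.assoc)
  from this[of "E / (2 * c)"] show ?thesis
    using c by (cases "0 < E") (auto simp: True)
next
  case False
  define l where "l = sqrt (I / c)"
  have l: "0 < l" and "l\<^sup>2 * c = I" and "l * sqrt (I * c) = I"
    using False I c by (simp_all add: l_def flip: real_sqrt_mult)
  have "l * E \<le> I + l\<^sup>2 * c"
    by (rule H[OF l])
  also have "\<dots> = l * (2 * sqrt (I * c))"
    by (subst mult.left_commute) (simp add: \<open>l\<^sup>2 * c = I\<close> \<open>l * sqrt (I * c) = I\<close>)
  finally show ?thesis
    using l by (rule mult_left_le_imp_le)
qed

lemma integrable_gen_gap_pair: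
  assumes \<mu>: "prob_space \<mu>" and J: "prob_space J" and sets: "sets J = sets ((\<Pi>\<^sub>M i\<in>{..<n}. \<mu>) \<Otimes>\<^sub>M V)"
    and \<Delta>: "(\<lambda>(u, z). \<Delta> u z) \<in> borel_measurable (V \<Otimes>\<^sub>M \<mu>)"
    and B: "\<And>u z. u \<in> space V \<Longrightarrow> z \<in> space \<mu> \<Longrightarrow> \<bar>\<Delta> u z\<bar> \<le> B"
  shows "integrable J (\<lambda>p. gen_gap n \<mu> (\<Delta> (snd p)) (fst p))"
proof -
  interpret J: prob_space J by fact
  have "\<bar>gen_gap n \<mu> (\<Delta> (snd p)) (fst p)\<bar> \<le> 2 * B" if "p \<in> space J" for p
  proof -
    have "snd p \<in> space V" and "fst p \<in> space (\<Pi>\<^sub>M i\<in>{..<n}. \<mu>)"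
      using that by (auto simp: sets_eq_imp_space_eq[OF sets] space_pair_measure)
    then have "snd p \<in> space V" and "\<And>i. i < n \<Longrightarrow> fst p i \<in> space \<mu>"
      by (auto simp: space_PiM intro: PiE_mem)
    moreover from this(1) have "\<Delta> (snd p) \<in> borel_measurable \<mu>"
      using measurable_Pair2[OF \<Delta>] by simp
    ultimately show ?thesis
      using B by (intro abs_gen_gap_le[OF \<mu>]) auto
  qed
  moreover have "(\<lambda>p. gen_gap n \<mu> (\<Delta> (snd p)) (fst p)) \<in> borel_measurable J"
    using measurable_gen_gap[OF prob_space_imp_sigma_finite[OF \<mu>] \<Delta>] sets by (simp cong: measurable_cong_sets)
  ultimately show ?thesis
    by (intro J.integrable_const_bound[where B="2 * B"] AE_I2) auto
qed

lemma integral_gen_gap_le_KL_divergence: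
  fixes \<Delta> :: "'v \<Rightarrow> 'z \<Rightarrow> real" and \<mu> :: "'z measure" and V :: "'v measure" and n :: nat
  defines "Q \<equiv> (\<Pi>\<^sub>M i\<in>{..<n}. \<mu>) \<Otimes>\<^sub>M V"
  assumes \<mu>: "prob_space \<mu>" and V: "prob_space V" and J: "prob_space J" and sets: "sets J = sets Q"
    and ac: "absolutely_continuous Q J" and int: "integrable J (entropy_density (exp 1) Q J)"
    and \<Delta>: "(\<lambda>(u, z). \<Delta> u z) \<in> borel_measurable (V \<Otimes>\<^sub>M \<mu>)"
    and B: "\<And>u z. u \<in> space V \<Longrightarrow> z \<in> space \<mu> \<Longrightarrow> \<bar>\<Delta> u z\<bar> \<le> B" and "0 < B" and n: "0 < n"
  shows "(\<integral>p. gen_gap n \<mu> (\<Delta> (snd p)) (fst p) \<partial>J) \<le> B * sqrt 2 * sqrt (KL_divergence (exp 1) Q J) / sqrt n"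
proof -
  interpret \<mu>: prob_space \<mu> by fact
  interpret J: prob_space J by fact
  have Q: "prob_space Q"
    unfolding Q_def by (intro prob_space_pair prob_space_PiM \<mu> V)
  define f where "f = (\<lambda>p. gen_gap n \<mu> (\<Delta> (snd p)) (fst p))"
  define KL where "KL = KL_divergence (exp 1) Q J"
  define c where "c = B\<^sup>2 / (2 * real n)"
  have fQ: "f \<in> borel_measurable Q"
    unfolding f_def Q_def by (rule measurable_gen_gap[OF \<mu>.sigma_finite_measure_axioms \<Delta>])
  have fJ: "integrable J f"
    unfolding f_def using \<mu> J sets \<Delta> B unfolding Q_def by (rule integrable_gen_gap_pair)
  have KL: "0 \<le> KL" and c: "0 < c"
    using KL_divergence_nonneg[OF Q J sets ac int] \<open>0 < B\<close> n by (simp_all add: KL_def c_def)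
  have "l * integral\<^sup>L J f \<le> KL + l\<^sup>2 * c" if "0 < l" for l
  proof -
    have "(\<lambda>p. l * f p - l\<^sup>2 * c) \<in> borel_measurable Q"
      using fQ by simp
    moreover have "(\<integral>\<^sup>+p. ennreal (exp (l * f p - l\<^sup>2 * c)) \<partial>Q) \<le> 1"
      unfolding f_def Q_def c_def using nn_integral_exp_gen_gap_le[OF \<mu> V \<Delta> B \<open>0 < l\<close> n]
      by (simp add: power_divide)
    ultimately have "(\<integral>p. l * f p - l\<^sup>2 * c \<partial>J) \<le> KL"
      unfolding KL_def using fJ
      by (intro integral_le_KL_divergence[OF Q J sets ac int]) auto
    then show ?thesis
      using fJ by (simp add: J.prob_space)
  qed
  then have "integral\<^sup>L J f \<le> 2 * sqrt (KL * c)"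
    using KL c by (rule le_two_sqrt_of_quadratic_bound)
  also have "2 * sqrt (KL * c) = sqrt (4 * (KL * c))"
    by (simp add: real_sqrt_mult real_sqrt_four)
  also have "4 * (KL * c) = (B * sqrt 2 * sqrt KL / sqrt n)\<^sup>2"
    using KL n by (simp add: c_def power_mult_distrib power_divide)
  also have "sqrt \<dots> = B * sqrt 2 * sqrt KL / sqrt n"
    using \<open>0 < B\<close> KL by simp
  finally show ?thesis
    by (simp add: f_def KL_def)
qed

lemma integral_gen_gap_le_mutual_information:
  fixes \<Delta> :: "'v \<Rightarrow> 'z \<Rightarrow> real" and \<mu> :: "'z measure" and V :: "'v measure" and n :: nat
    and P :: "'p measure" and X :: "'p \<Rightarrow> nat \<Rightarrow> 'z" and Y :: "'p \<Rightarrow> 'v"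
  defines "S \<equiv> \<Pi>\<^sub>M i\<in>{..<n}. \<mu>"
  defines "I \<equiv> prob_space.mutual_information P (exp 1) S V X Y"
  assumes \<mu>: "prob_space \<mu>" and P: "prob_space P"
    and X: "X \<in> measurable P S" and law: "distr P S X = S" and Y: "Y \<in> measurable P V"
    and MI: "finite_KL (distr P S X \<Otimes>\<^sub>M distr P V Y) (distr P (S \<Otimes>\<^sub>M V) (\<lambda>p. (X p, Y p)))"
    and \<Delta>: "(\<lambda>(u, z). \<Delta> u z) \<in> borel_measurable (V \<Otimes>\<^sub>M \<mu>)"
    and B: "\<And>u z. u \<in> space V \<Longrightarrow> z \<in> space \<mu> \<Longrightarrow> \<bar>\<Delta> u z\<bar> \<le> B" and "0 < B" and n: "0 < n"
  shows "0 \<le> I"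
    and "integrable P (\<lambda>p. gen_gap n \<mu> (\<Delta> (Y p)) (X p))"
    and "(\<integral>p. gen_gap n \<mu> (\<Delta> (Y p)) (X p) \<partial>P) \<le> B * sqrt 2 * sqrt I / sqrt n"
proof -
  interpret P: prob_space P by fact
  define V' where "V' = distr P V Y"
  define J where "J = distr P (S \<Otimes>\<^sub>M V) (\<lambda>p. (X p, Y p))"
  have XY: "(\<lambda>p. (X p, Y p)) \<in> measurable P (S \<Otimes>\<^sub>M V)"
    using X Y by measurable
  have V': "prob_space V'" and J: "prob_space J"
    unfolding V'_def J_def using X Y XY by (auto intro!: P.prob_space_distr)
  have sets: "sets J = sets (S \<Otimes>\<^sub>M V')"
    by (simp add: J_def V'_def cong: sets_pair_measure_cong)
  have I: "I = KL_divergence (exp 1) (S \<Otimes>\<^sub>M V') J"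
    unfolding I_def P.mutual_information_def law V'_def J_def ..
  have \<Delta>': "(\<lambda>(u, z). \<Delta> u z) \<in> borel_measurable (V' \<Otimes>\<^sub>M \<mu>)"
    using \<Delta> by (simp add: V'_def cong: measurable_cong_sets sets_pair_measure_cong)
  have B': "\<And>u z. u \<in> space V' \<Longrightarrow> z \<in> space \<mu> \<Longrightarrow> \<bar>\<Delta> u z\<bar> \<le> B"
    using B by (simp add: V'_def)
  have KL: "absolutely_continuous (S \<Otimes>\<^sub>M V') J" "integrable J (entropy_density (exp 1) (S \<Otimes>\<^sub>M V') J)"
    using MI by (simp_all add: finite_KL_def law V'_def J_def)
  have S: "prob_space S"
    unfolding S_def by (intro prob_space_PiM \<mu>)
  show "0 \<le> I"
    unfolding I using KL by (intro KL_divergence_nonneg prob_space_pair S V' J sets)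
  have gm: "(\<lambda>p. gen_gap n \<mu> (\<Delta> (snd p)) (fst p)) \<in> borel_measurable (S \<Otimes>\<^sub>M V)"
    unfolding S_def by (rule measurable_gen_gap[OF prob_space_imp_sigma_finite[OF \<mu>] \<Delta>])
  show "integrable P (\<lambda>p. gen_gap n \<mu> (\<Delta> (Y p)) (X p))"
    using integrable_gen_gap_pair[OF \<mu> J sets[unfolded S_def] \<Delta>' B'] integrable_distr_eq[OF XY gm]
    by (simp add: J_def S_def)
  show "(\<integral>p. gen_gap n \<mu> (\<Delta> (Y p)) (X p) \<partial>P) \<le> B * sqrt 2 * sqrt I / sqrt n"
    using integral_gen_gap_le_KL_divergence[OF \<mu> V' J sets[unfolded S_def] KL[unfolded S_def] \<Delta>' B' \<open>0 < B\<close> n]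
      integral_distr[OF XY gm]
    by (simp add: I J_def S_def)
qed

section \<open>Chaining over the layers\<close>

lemma joint_law:
  fixes S :: "'a measure" and W :: "'b measure"
  assumes S: "prob_space S" and K: "K \<in> measurable S (prob_algebra W)"
  defines "P \<equiv> S \<bind> (\<lambda>s. K s \<bind> (\<lambda>w. return (S \<Otimes>\<^sub>M W) (s, w)))"
  shows "prob_space P" and "sets P = sets (S \<Otimes>\<^sub>M W)" and "distr P S fst = S"
proof -
  interpret S: prob_space S by fact
  define C where "C = (\<lambda>s. K s \<bind> (\<lambda>w. return (S \<Otimes>\<^sub>M W) (s, w)))"
  have "(\<lambda>(s, w). return (S \<Otimes>\<^sub>M W) (s, w)) \<in> S \<Otimes>\<^sub>M W \<rightarrow>\<^sub>M prob_algebra (S \<Otimes>\<^sub>M W)"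
    using measurable_return_prob_space[of "S \<Otimes>\<^sub>M W"] by (simp add: case_prod_beta')
  then have C: "C \<in> S \<rightarrow>\<^sub>M prob_algebra (S \<Otimes>\<^sub>M W)"
    unfolding C_def by (rule measurable_bind_prob_space2[OF K])
  have S': "S \<in> space (prob_algebra S)"
    by (simp add: space_prob_algebra S.prob_space_axioms)
  show "prob_space P" and "sets P = sets (S \<Otimes>\<^sub>M W)"
    unfolding P_def C_def[symmetric] by (rule prob_space_bind'[OF S' C] sets_bind'[OF S' C])+
  have "distr (C s) S fst = return S s" if s: "s \<in> space S" for s
  proof -
    have Ks: "prob_space (K s)" "sets (K s) = sets W"
      using measurable_space[OF K s] by (auto simp: space_prob_algebra)
    have "(\<lambda>w. (s, w)) \<in> measurable (K s) (S \<Otimes>\<^sub>M W)"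
      using s by (simp add: measurable_cong_sets[OF Ks(2) refl])
    then have "(\<lambda>w. return (S \<Otimes>\<^sub>M W) (s, w)) \<in> measurable (K s) (subprob_algebra (S \<Otimes>\<^sub>M W))"
      by (rule measurable_compose[OF _ return_measurable])
    then have "distr (C s) S fst = K s \<bind> (\<lambda>w. distr (return (S \<Otimes>\<^sub>M W) (s, w)) S fst)"
      unfolding C_def by (rule distr_bind[OF _ prob_space.not_empty[OF Ks(1)] measurable_fst])
    also have "\<dots> = K s \<bind> (\<lambda>w. return S s)"
    proof (intro bind_cong_All ballI)
      fix w assume "w \<in> space (K s)"
      then have "(s, w) \<in> space (S \<Otimes>\<^sub>M W)"
        using s sets_eq_imp_space_eq[OF Ks(2)] by (simp add: space_pair_measure)
      then show "distr (return (S \<Otimes>\<^sub>M W) (s, w)) S fst = return S s"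
        using distr_return[OF measurable_fst, of "(s, w)" S W] by simp
    qed
    also have "\<dots> = return S s"
      by (rule bind_const'[OF Ks(1)]) (simp add: s prob_space_imp_subprob_space prob_space_return)
    finally show ?thesis .
  qed
  then have "S \<bind> (\<lambda>s. distr (C s) S fst) = S \<bind> return S"
    by (intro bind_cong_All) simp
  then show "distr P S fst = S"
    unfolding P_def C_def[symmetric]
    by (simp add: distr_bind[OF measurable_prob_algebraD[OF C] S.not_empty measurable_fst] bind_return'')
qed

lemma integral_gen_gap_nonpos:
  assumes "\<And>p. p \<in> space P \<Longrightarrow> \<not> integrable \<mu> (ell (snd p))"
    and "\<And>p i. p \<in> space P \<Longrightarrow> i < n \<Longrightarrow> 0 \<le> ell (snd p) (fst p i)"
  shows "(\<integral>p. gen_gap n \<mu> (ell (snd p)) (fst p) \<partial>P) \<le> 0"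
proof -
  have "0 \<le> (\<integral>p. - gen_gap n \<mu> (ell (snd p)) (fst p) \<partial>P)"
    using assms by (intro integral_nonneg_AE AE_I2) (simp add: gen_gap_nonpos)
  then show ?thesis
    by simp
qed

lemma gen_error_le_sum_mutual_information:
  fixes \<mu> :: "'z measure" and W :: "'w measure" and P :: "((nat \<Rightarrow> 'z) \<times> 'w) measure"
    and V :: "nat \<Rightarrow> 'v measure" and \<pi> :: "nat \<Rightarrow> 'w \<Rightarrow> 'v" and \<Delta> :: "nat \<Rightarrow> 'v \<Rightarrow> 'z \<Rightarrow> real"
    and n :: nat
  defines "S \<equiv> \<Pi>\<^sub>M i\<in>{..<n}. \<mu>"
  assumes \<mu>: "prob_space \<mu>" and P: "prob_space P" "sets P = sets (S \<Otimes>\<^sub>M W)" "distr P S fst = S"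
    and n: "0 < n" and A: "finite A"
    and \<pi>: "\<And>k. k \<in> A \<Longrightarrow> \<pi> k \<in> measurable W (V k)"
    and \<Delta>: "\<And>k. k \<in> A \<Longrightarrow> (\<lambda>(u, z). \<Delta> k u z) \<in> borel_measurable (V k \<Otimes>\<^sub>M \<mu>)"
    and \<Delta>_bound: "\<And>k u z. k \<in> A \<Longrightarrow> u \<in> space (V k) \<Longrightarrow> z \<in> space \<mu> \<Longrightarrow> \<bar>\<Delta> k u z\<bar> \<le> B k"
    and B: "\<And>k. k \<in> A \<Longrightarrow> 0 < B k"
    and ell\<^sub>0: "ell\<^sub>0 \<in> borel_measurable \<mu>"
    and ell: "\<And>w z. w \<in> space W \<Longrightarrow> z \<in> space \<mu> \<Longrightarrow> ell w z = ell\<^sub>0 z + (\<Sum>k\<in>A. \<Delta> k (\<pi> k w) z)"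
    and ell_nonneg: "\<And>w z. w \<in> space W \<Longrightarrow> z \<in> space \<mu> \<Longrightarrow> 0 \<le> ell w z"
    and MI: "\<And>k. k \<in> A \<Longrightarrow> finite_KL (distr P S fst \<Otimes>\<^sub>M distr P (V k) (\<lambda>p. \<pi> k (snd p)))
                                         (distr P (S \<Otimes>\<^sub>M V k) (\<lambda>p. (fst p, \<pi> k (snd p))))"
  shows "(\<integral>p. gen_gap n \<mu> (ell (snd p)) (fst p) \<partial>P)
    \<le> (\<Sum>k\<in>A. B k * sqrt 2 * sqrt (prob_space.mutual_information P (exp 1) S (V k) fst (\<lambda>p. \<pi> k (snd p)))
                 / sqrt n)"
    (is "_ \<le> (\<Sum>k\<in>A. ?bound k)")
proof -
  interpret \<mu>: prob_space \<mu> by fact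
  have sp: "snd p \<in> space W" "\<And>i. i < n \<Longrightarrow> fst p i \<in> space \<mu>" if "p \<in> space P" for p
  proof -
    from that have "snd p \<in> space W" and "fst p \<in> (\<Pi>\<^sub>E i\<in>{..<n}. space \<mu>)"
      by (simp_all add: sets_eq_imp_space_eq[OF P(2)] space_pair_measure S_def space_PiM mem_Times_iff)
    then show "snd p \<in> space W" "\<And>i. i < n \<Longrightarrow> fst p i \<in> space \<mu>"
      by auto
  qed
  have mP: "measurable P N = measurable (S \<Otimes>\<^sub>M W) N" for N :: "'c measure"
    by (rule measurable_cong_sets[OF P(2) refl])
  have fst: "fst \<in> measurable P S" and \<pi>_snd: "k \<in> A \<Longrightarrow> (\<lambda>p. \<pi> k (snd p)) \<in> measurable P (V k)" for k
    unfolding mP by (auto intro: measurable_compose[OF measurable_snd \<pi>])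
  note per_layer = integral_gen_gap_le_mutual_information[OF \<mu> P(1) fst[unfolded S_def] P(3)[unfolded S_def] \<pi>_snd
      MI[unfolded S_def] \<Delta> \<Delta>_bound B n, folded S_def]
  have int_\<Delta>: "integrable \<mu> (\<Delta> k (\<pi> k w))" if "k \<in> A" "w \<in> space W" for k w
    using that \<Delta>_bound[OF _ measurable_space[OF \<pi>]] measurable_Pair2[OF \<Delta> measurable_space[OF \<pi>]]
    by (intro \<mu>.integrable_const_bound[where B="B k"] AE_I2) auto
  show ?thesis
  proof (cases "integrable \<mu> ell\<^sub>0")
    case False
    \<comment> \<open>then no \<open>ell w\<close> is integrable, its integral is the junk value \<open>0\<close>, and the gap is \<open>\<le> 0\<close>\<close>
    have "\<not> integrable \<mu> (ell w)" if w: "w \<in> space W" for w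
      using False int_\<Delta>[OF _ w] ell[OF w] by (rule not_integrable_decompose)
    then have "(\<integral>p. gen_gap n \<mu> (ell (snd p)) (fst p) \<partial>P) \<le> 0"
      using sp ell_nonneg by (intro integral_gen_gap_nonpos) auto
    also have "0 \<le> (\<Sum>k\<in>A. ?bound k)"
      using per_layer(1) B by (intro sum_nonneg) (simp add: less_imp_le)
    finally show ?thesis .
  next
    case True
    define G where "G = (\<lambda>k p. gen_gap n \<mu> (\<Delta> k (\<pi> k (snd p))) (fst p))"
    have "gen_gap n \<mu> (ell (snd p)) (fst p) = gen_gap n \<mu> ell\<^sub>0 (fst p) + (\<Sum>k\<in>A. G k p)"
      if "p \<in> space P" for p
      unfolding G_def using True int_\<Delta> ell sp[OF that]
      by (intro gen_gap_decompose[where g="\<lambda>k. \<Delta> k (\<pi> k (snd p))"]) auto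
    moreover have "integrable P (\<lambda>p. gen_gap n \<mu> ell\<^sub>0 (fst p))"
      "(\<integral>p. gen_gap n \<mu> ell\<^sub>0 (fst p) \<partial>P) = 0"
      using integrable_distr_eq[OF fst, of "gen_gap n \<mu> ell\<^sub>0"] integral_distr[OF fst, of "gen_gap n \<mu> ell\<^sub>0"]
        integrable_gen_gap_PiM[OF \<mu> True] integral_gen_gap_PiM[OF \<mu> True n]
      by (simp_all add: P(3)[unfolded S_def] S_def)
    moreover have "integrable P (G k)" and "integral\<^sup>L P (G k) \<le> ?bound k" if "k \<in> A" for k
      using per_layer(2,3) that unfolding G_def by simp_all
    ultimately have "(\<integral>p. gen_gap n \<mu> (ell (snd p)) (fst p) \<partial>P) = (\<Sum>k\<in>A. integral\<^sup>L P (G k))"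
      by (simp add: Bochner_Integration.integral_sum cong: Bochner_Integration.integral_cong)
    also have "\<dots> \<le> (\<Sum>k\<in>A. ?bound k)"
      using \<open>\<And>k. k \<in> A \<Longrightarrow> integral\<^sup>L P (G k) \<le> ?bound k\<close> by (rule sum_mono)
    finally show ?thesis .
  qed
qed

theorem theorem1:
  fixes d m n :: nat
    and \<delta> :: "nat \<Rightarrow> nat"
    and R L :: real
    and M :: "nat \<Rightarrow> nat \<Rightarrow> nat \<Rightarrow> real"
    and \<alpha> :: "nat \<Rightarrow> real"
    and \<phi> :: "nat \<Rightarrow> (nat \<Rightarrow> real) \<Rightarrow> (nat \<Rightarrow> real)"
    and \<phi>o :: "(nat \<Rightarrow> real) \<Rightarrow> (nat \<Rightarrow> real)"
    and Y :: "'y measure"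
    and \<mu> :: "((nat \<Rightarrow> real) \<times> 'y) measure"
    and ell :: "(nat \<Rightarrow> nat \<Rightarrow> nat \<Rightarrow> real) \<Rightarrow> ((nat \<Rightarrow> real) \<times> 'y) \<Rightarrow> real"
    and K :: "(nat \<Rightarrow> (nat \<Rightarrow> real) \<times> 'y) \<Rightarrow> (nat \<Rightarrow> nat \<Rightarrow> nat \<Rightarrow> real) measure"
  defines "Zsp \<equiv> restrict_space borel (Xset m R) \<Otimes>\<^sub>M Y"
    and "W \<equiv> Wspace \<delta> M \<alpha> d"
    and "Sn \<equiv> (\<Pi>\<^sub>M i\<in>{..<n}. \<mu>)"
    and "P \<equiv> ((\<Pi>\<^sub>M i\<in>{..<n}. \<mu>) \<bind> (\<lambda>s. K s \<bind> (\<lambda>w. return ((\<Pi>\<^sub>M i\<in>{..<n}. \<mu>) \<Otimes>\<^sub>M Wspace \<delta> M \<alpha> d) (s, w))))"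
    and "h \<equiv> net d \<delta> \<phi> \<phi>o"
    and "L\<mu> \<equiv> (\<lambda>w. \<integral>z. ell w z \<partial>\<mu>)"
    and "LS \<equiv> (\<lambda>s w. (1 / real n) * (\<Sum>i<n. ell w (s i)))"
    and "Ik \<equiv> (\<lambda>k. prob_space.mutual_information ((\<Pi>\<^sub>M i\<in>{..<n}. \<mu>) \<bind> (\<lambda>s. K s \<bind> (\<lambda>w. return ((\<Pi>\<^sub>M i\<in>{..<n}. \<mu>) \<Otimes>\<^sub>M Wspace \<delta> M \<alpha> d) (s, w)))) (exp 1) (\<Pi>\<^sub>M i\<in>{..<n}. \<mu>) (Wspace \<delta> M \<alpha> k)
                    fst (\<lambda>p. restrict (snd p) {1..k}))"
  assumes d: "2 \<le> d"
    and m: "0 < m" and \<delta>0: "\<delta> 0 = m" and \<delta>pos: "\<forall>j\<in>{1..d}. 0 < \<delta> j"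
    and R: "0 < R"
    and M: "\<forall>j\<in>{1..d}. M j \<in> mats (\<delta> j) (\<delta> (j - 1)) \<and> 0 < spec_norm (\<delta> j) (\<delta> (j - 1)) (M j)"
    and \<alpha>: "\<forall>j\<in>{1..d}. 0 < \<alpha> j"
    and \<phi>_dim: "\<forall>j\<in>{1..<d}. \<forall>u\<in>vecs (\<delta> j). \<phi> (\<delta> j) u \<in> vecs (\<delta> j)"
    and \<phi>_lip: "\<forall>j\<in>{1..<d}. \<forall>u\<in>vecs (\<delta> j). \<forall>v\<in>vecs (\<delta> j).
                   vnorm (\<delta> j) (\<phi> (\<delta> j) u - \<phi> (\<delta> j) v) \<le> vnorm (\<delta> j) (u - v)"
    and \<phi>_0: "\<forall>j\<in>{1..<d}. \<phi> (\<delta> j) (\<lambda>_. 0) = (\<lambda>_. 0)"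
    and \<phi>o: "\<phi>o = id \<or> \<phi>o = softmax (\<delta> d)"
    and \<mu>: "prob_space \<mu>" "sets \<mu> = sets Zsp"
    and ell_meas: "(\<lambda>(w, z). ell w z) \<in> borel_measurable (W \<Otimes>\<^sub>M Zsp)"
    and ell_nonneg: "\<forall>w\<in>space W. \<forall>z\<in>space Zsp. 0 \<le> ell w z"
    and L: "0 < L"
    and ell_lip: "\<forall>w\<in>space W. \<forall>w'\<in>space W. \<forall>z\<in>space Zsp.
                 \<bar>ell w z - ell w' z\<bar> \<le> L * vnorm (\<delta> d) (h w (fst z) - h w' (fst z))"
    and n: "1 \<le> n"
    and K: "K \<in> measurable Sn (prob_algebra W)"
    and MI_finite: "\<forall>k\<in>{1..d}.
        finite_KL (distr P Sn fst \<Otimes>\<^sub>M distr P (Wspace \<delta> M \<alpha> k) (\<lambda>p. restrict (snd p) {1..k}))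
          (distr P (Sn \<Otimes>\<^sub>M Wspace \<delta> M \<alpha> k) (\<lambda>p. (fst p, restrict (snd p) {1..k})))"
  shows "(\<integral>p. L\<mu> (snd p) - LS (fst p) (snd p) \<partial>P)
           \<le> L * (\<Prod>j=1..d. spec_norm (\<delta> j) (\<delta> (j - 1)) (M j)) * R * sqrt 2 / sqrt (real n)
              * (\<Sum>k=1..d. beta \<alpha> k * sqrt (Ik k))"
proof -
  define B where "B k = L * (\<Prod>j=1..d. spec_norm (\<delta> j) (\<delta> (j - 1)) (M j)) * R * beta \<alpha> k" for k
  define \<Delta> where "\<Delta> k u z = ell (hybrid d k M u) z - ell (hybrid d (k - 1) M u) z" for k u z
  have space_\<mu>: "space \<mu> = space Zsp"
    by (rule sets_eq_imp_space_eq[OF \<mu>(2)])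
  have ell_meas': "(\<lambda>(w, z). ell w z) \<in> borel_measurable (Wspace \<delta> M \<alpha> d \<Otimes>\<^sub>M \<mu>)"
    using ell_meas unfolding W_def by (simp cong: measurable_cong_sets[OF sets_pair_measure_cong[OF refl \<mu>(2)]])
  have centres: "M j \<in> Bset \<delta> M \<alpha> j" if "j \<in> {1..d}" for j
    using M[rule_format, OF that] \<alpha>[rule_format, OF that] by (intro centre_in_Bset) auto
  have \<Delta>_bound: "\<bar>\<Delta> k u z\<bar> \<le> B k"
    if "k \<in> {1..d}" and "u \<in> space (Wspace \<delta> M \<alpha> k)" and z: "z \<in> space \<mu>" for k u z
    unfolding \<Delta>_def B_def
  proof (rule abs_loss_hybrid_diff_le[OF \<phi>_lip \<phi>_0 d \<phi>o _ _ _ centres that(1,2)])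
    show "vnorm (\<delta> 0) (fst z) \<le> R"
      using z by (auto simp: space_\<mu> Zsp_def space_pair_measure space_restrict_space Xset_def \<delta>0)
  qed (use ell_lip z L \<alpha> in \<open>auto simp: space_\<mu> W_def h_def\<close>)
  have "(\<integral>p. gen_gap n \<mu> (ell (snd p)) (fst p) \<partial>P) \<le> (\<Sum>k\<in>{1..d}. B k * sqrt 2 * sqrt (Ik k) / sqrt n)"
    unfolding Ik_def[folded P_def]
  proof (rule gen_error_le_sum_mutual_information[OF \<mu>(1)
        joint_law[OF prob_space_PiM[OF \<mu>(1)] K[unfolded Sn_def W_def], folded P_def] _ finite_atLeastAtMost
        measurable_restrict_Wspace _ \<Delta>_bound])
    show "(\<lambda>(u, z). \<Delta> k u z) \<in> borel_measurable (Wspace \<delta> M \<alpha> k \<Otimes>\<^sub>M \<mu>)" for k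
      unfolding \<Delta>_def using measurable_loss_hybrid[OF centres ell_meas'] by (simp add: case_prod_beta')
    show "ell (restrict M {1..d}) \<in> borel_measurable \<mu>"
      using measurable_Pair2[OF ell_meas', of "restrict M {1..d}"] centres by (simp add: space_Wspace)
    show "w \<in> space (Wspace \<delta> M \<alpha> d) \<Longrightarrow> ell w z = ell (restrict M {1..d}) z
        + (\<Sum>k\<in>{1..d}. \<Delta> k (restrict w {1..k}) z)" for w z
      unfolding \<Delta>_def by (rule telescope_hybrid)
    show "0 < B k" if "k \<in> {1..d}" for k
      using that L R M \<alpha> by (auto simp: B_def beta_def intro!: mult_pos_pos prod_pos)
  qed (use n ell_nonneg MI_finite space_\<mu> in \<open>auto simp: W_def Sn_def\<close>)
  moreover have "(\<Sum>k\<in>{1..d}. B k * sqrt 2 * sqrt (Ik k) / sqrt n)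
      = L * (\<Prod>j=1..d. spec_norm (\<delta> j) (\<delta> (j - 1)) (M j)) * R * sqrt 2 / sqrt (real n)
        * (\<Sum>k=1..d. beta \<alpha> k * sqrt (Ik k))"
    by (simp add: B_def sum_distrib_left sum_distrib_right sum_divide_distrib mult_ac)
  ultimately show ?thesis
    by (simp add: L\<mu>_def LS_def gen_gap_def)
qed

end
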